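(* Let $\mathbf{\mathsf{P}SymmH}$ be the groupoid whose objects are complex Hilbert spaces of dimension greater than $2$, and whose morphisms $\mathcal{H}\to\mathcal{K}$ are equivalence classes $[U]$ of semiunitary maps $U:\mathcal{H}\to\mathcal{K}$ under the relation $U\sim V \iff U=\lambda V$ for some $\lambda\in\mathbb{C}$ with $|\lambda|=1$. Let $\mathbf{bmChu}$ be the category whose objects are biextensional Chu spaces over $[0,1]$ and whose morphisms are Chu morphisms $(f_*,f^* )$ with $f_*$ injective. Define $\mathsf{P}R:\mathbf{\mathsf{P}SymmH}\to\mathbf{bmChu}$ on objects by $\mathcal{H}\mapsto(\mathsf{P}(\mathcal{H}),\mathsf{L}(\mathcal{H}),\bar e_{\mathcal{H}})$ and on morphisms by $[U]\mapsto(\mathsf{P}(U),\,U^{-1})$, where $\mathsf{P}(U)([\psi])=[U\psi]$ and $U^{-1}$ sends a closed subspace $S$ of $\mathcal{K}$ to its inverse image $U^{-1}(S)$. Then $\mathsf{P}R$ is a well-defined functor which is full and faithful.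
   Context: A Chu space over a set $K$ is a triple $(X,A,e)$ with $e:X\times A\to K$. A Chu morphism $(X,A,e)\to(X',A',e')$ is a pair $(f_*:X\to X',\,f^*:A'\to A)$ with $e(x,f^*(a'))=e'(f_*(x),a')$ for all $x\in X,a'\in A'$; composition is $(g\circ f)_*=g_*\circ f_*$, $(g\circ f)^*=f^*\circ g^*$. The space is extensional if $e(x,a_1)=e(x,a_2)$ for all $x$ implies $a_1=a_2$; separated if $e(x_1,a)=e(x_2,a)$ for all $a$ implies $x_1=x_2$; biextensional if both. For a complex Hilbert space $\mathcal{H}$: $\mathsf{L}(\mathcal{H})$ is the set of closed subspaces, $P_S$ the orthogonal projector onto $S$, $\mathsf{P}(\mathcal{H})$ the set of rays $[\psi]=\{\lambda\psi:\lambda\in\mathbb{C}\}$ for $\psi\neq 0$, and $\bar e_{\mathcal{H}}([\psi],S)=\|P_S\psi\|^2/\|\psi\|^2$. A map $U:\mathcal{H}\to\mathcal{K}$ is semiunitary if it is a bijection with $U(\phi+\psi)=U\phi+U\psi$, $U(\lambda\phi)=\sigma(\lambda)U\phi$, $\langle U\phi,U\psi\rangle=\sigma(\langle\phi,\psi\rangle)$, where $\sigma$ is either the identity or complex conjugation (i.e. $U$ is unitary or antiunitary). A functor is full (faithful) if its action on each hom-set is surjective (injective). *)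

theory Defs
  imports Complex_Main
begin

text \<open>A complex Hilbert space: a complete (real) normed space carrying a complex
scalar multiplication extending the real one and a complex inner product
(conjugate-linear in the first, linear in the second argument) inducing the norm.\<close>

class chilbert = banach +
  fixes hscale :: "complex \<Rightarrow> 'a \<Rightarrow> 'a"
    and hinner :: "'a \<Rightarrow> 'a \<Rightarrow> complex"
  assumes hscale_add_right: "hscale c (x + y) = hscale c x + hscale c y"
    and hscale_add_left: "hscale (c + d) x = hscale c x + hscale d x"
    and hscale_hscale: "hscale c (hscale d x) = hscale (c * d) x"
    and hscale_one: "hscale 1 x = x"
    and scaleR_hscale: "scaleR r x = hscale (complex_of_real r) x"
    and hinner_add_right: "hinner x (y + z) = hinner x y + hinner x z"
    and hinner_hscale_right: "hinner x (hscale c y) = c * hinner x y"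
    and hinner_commute: "hinner y x = cnj (hinner x y)"
    and hinner_norm: "hinner x x = complex_of_real ((norm x)\<^sup>2)"

definition dim_gt2 :: "'a::chilbert itself \<Rightarrow> bool" where
  "dim_gt2 _ \<longleftrightarrow> (\<exists>x y z :: 'a. \<forall>a b c.
      hscale a x + hscale b y + hscale c z = 0 \<longrightarrow> a = 0 \<and> b = 0 \<and> c = 0)"

definition Lsub :: "'a::chilbert set set" where
  "Lsub = {S. closed S \<and> 0 \<in> S \<and> (\<forall>x\<in>S. \<forall>y\<in>S. x + y \<in> S)
               \<and> (\<forall>c. \<forall>x\<in>S. hscale c x \<in> S)}"

definition proj :: "'a::chilbert set \<Rightarrow> 'a \<Rightarrow> 'a" where
  "proj S \<psi> = (THE p. p \<in> S \<and> (\<forall>s\<in>S. hinner s (\<psi> - p) = 0))"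

definition ray :: "'a::chilbert \<Rightarrow> 'a set" where
  "ray \<psi> = {hscale l \<psi> | l. True}"

definition rays :: "'a::chilbert set set" where
  "rays = {ray \<psi> | \<psi>. \<psi> \<noteq> 0}"

definition rep :: "'a::chilbert set \<Rightarrow> 'a" where
  "rep r = (SOME \<psi>. \<psi> \<noteq> 0 \<and> r = ray \<psi>)"

definition ebar :: "'a::chilbert set \<Rightarrow> 'a set \<Rightarrow> real" where
  "ebar r S = (norm (proj S (rep r)))\<^sup>2 / (norm (rep r))\<^sup>2"

definition semiunitary :: "('a::chilbert \<Rightarrow> 'b::chilbert) \<Rightarrow> bool" where
  "semiunitary U \<longleftrightarrow> bij U \<and> (\<forall>x y. U (x + y) = U x + U y) \<and>
     (\<exists>\<sigma> \<in> {id, cnj}. (\<forall>l x. U (hscale l x) = hscale (\<sigma> l) (U x)) \<and>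
                      (\<forall>x y. hinner (U x) (U y) = \<sigma> (hinner x y)))"

definition su_equiv :: "('a::chilbert \<Rightarrow> 'b::chilbert) \<Rightarrow> ('a \<Rightarrow> 'b) \<Rightarrow> bool" where
  "su_equiv U V \<longleftrightarrow> (\<exists>l. cmod l = 1 \<and> (\<forall>x. U x = hscale l (V x)))"

definition PU :: "('a::chilbert \<Rightarrow> 'b::chilbert) \<Rightarrow> 'a set \<Rightarrow> 'b set" where
  "PU U r = ray (U (rep r))"

definition chu_space01 :: "'x set \<Rightarrow> 'a set \<Rightarrow> ('x \<Rightarrow> 'a \<Rightarrow> real) \<Rightarrow> bool" where
  "chu_space01 X A e \<longleftrightarrow> (\<forall>x\<in>X. \<forall>a\<in>A. e x a \<in> {0..1})"

definition extensional_chu :: "'x set \<Rightarrow> 'a set \<Rightarrow> ('x \<Rightarrow> 'a \<Rightarrow> 'k) \<Rightarrow> bool" where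
  "extensional_chu X A e \<longleftrightarrow>
     (\<forall>a1\<in>A. \<forall>a2\<in>A. (\<forall>x\<in>X. e x a1 = e x a2) \<longrightarrow> a1 = a2)"

definition separated_chu :: "'x set \<Rightarrow> 'a set \<Rightarrow> ('x \<Rightarrow> 'a \<Rightarrow> 'k) \<Rightarrow> bool" where
  "separated_chu X A e \<longleftrightarrow>
     (\<forall>x1\<in>X. \<forall>x2\<in>X. (\<forall>a\<in>A. e x1 a = e x2 a) \<longrightarrow> x1 = x2)"

definition biextensional_chu :: "'x set \<Rightarrow> 'a set \<Rightarrow> ('x \<Rightarrow> 'a \<Rightarrow> 'k) \<Rightarrow> bool" where
  "biextensional_chu X A e \<longleftrightarrow> extensional_chu X A e \<and> separated_chu X A e"

definition chu_morph ::
  "'x set \<Rightarrow> 'a set \<Rightarrow> ('x \<Rightarrow> 'a \<Rightarrow> 'k) \<Rightarrow> 'y set \<Rightarrow> 'b set \<Rightarrow> ('y \<Rightarrow> 'b \<Rightarrow> 'k)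
     \<Rightarrow> ('x \<Rightarrow> 'y) \<Rightarrow> ('b \<Rightarrow> 'a) \<Rightarrow> bool" where
  "chu_morph X A e X' A' e' fs fu \<longleftrightarrow>
     (\<forall>x\<in>X. fs x \<in> X') \<and> (\<forall>a'\<in>A'. fu a' \<in> A) \<and>
     (\<forall>x\<in>X. \<forall>a'\<in>A'. e x (fu a') = e' (fs x) a')"

definition bm_morph ::
  "'x set \<Rightarrow> 'a set \<Rightarrow> ('x \<Rightarrow> 'a \<Rightarrow> 'k) \<Rightarrow> 'y set \<Rightarrow> 'b set \<Rightarrow> ('y \<Rightarrow> 'b \<Rightarrow> 'k)
     \<Rightarrow> ('x \<Rightarrow> 'y) \<Rightarrow> ('b \<Rightarrow> 'a) \<Rightarrow> bool" where
  "bm_morph X A e X' A' e' fs fu \<longleftrightarrow> chu_morph X A e X' A' e' fs fu \<and> inj_on fs X"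

definition chu_eq :: "'x set \<Rightarrow> 'b set \<Rightarrow> ('x \<Rightarrow> 'y) \<Rightarrow> ('b \<Rightarrow> 'a) \<Rightarrow> ('x \<Rightarrow> 'y) \<Rightarrow> ('b \<Rightarrow> 'a) \<Rightarrow> bool" where
  "chu_eq X A' fs fu gs gu \<longleftrightarrow> (\<forall>x\<in>X. fs x = gs x) \<and> (\<forall>a\<in>A'. fu a = gu a)"

end

theory Submission
  imports Defs
begin

text \<open>
  Functoriality and faithfulness are elementary: a unitary or antiunitary \<open>U\<close> preserves
  orthogonal projections, and if \<open>U\<close>, \<open>V\<close> induce the same map on rays then \<open>U x = d(x) V x\<close>,
  where comparing \<open>x\<close>, \<open>y\<close> and \<open>x + y\<close> for independent \<open>x\<close>, \<open>y\<close> forces \<open>d\<close> to be constant.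

  Fullness does not need Wigner's theorem in full, because a Chu morphism \<open>(fs, fu)\<close> carries
  more information than the map on rays. First \<open>fu (fs r) = r\<close>, so \<open>fs\<close> preserves transition
  probabilities. Fix a unit vector \<open>e\<close> and normalise lifts of the points of the hyperplane
  \<open>\<langle>e, x\<rangle> = 1\<close>; this preserves the moduli of inner products. Extensionality shows that \<open>fu\<close>
  sends the plane spanned by \<open>e'\<close> and the image of \<open>f \<perp> e\<close> to the plane spanned by \<open>e\<close> and \<open>f\<close>,
  which yields \<open>|\<langle>x, y\<rangle> - 1|\<close> as well, hence the real parts of inner products. So the induced
  map on \<open>e\<^sup>\<perp>\<close> is real linear and isometric; it sends \<open>i z\<close> to \<open>\<plusminus>i\<close> times the image of \<open>z\<close>
  with a sign independent of \<open>z\<close>, and the sign decides between a unitary and an antiunitary map.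
\<close>

section \<open>Algebra of complex inner product spaces\<close>

declare hscale_one [simp]

lemma hscale_zero_left [simp]: "hscale 0 (x::'a::chilbert) = 0"
  using hscale_add_left[of 0 0 x] by simp

lemma hscale_zero_right [simp]: "hscale c (0::'a::chilbert) = 0"
  using hscale_add_right[of c 0 "0::'a"] by simp

lemma hscale_minus_left: "hscale (- c) (x::'a::chilbert) = - hscale c x"
  using hscale_add_left[of "- c" c x] by (simp add: eq_neg_iff_add_eq_0)

lemma hscale_diff_left: "hscale (c - d) (x::'a::chilbert) = hscale c x - hscale d x"
  using hscale_add_left[of "c - d" d x] by (simp add: eq_diff_eq)

lemma hscale_diff_right: "hscale c (x - y::'a::chilbert) = hscale c x - hscale c y"
  using hscale_add_right[of c "x - y" y] by (simp add: eq_diff_eq)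

lemma minus_eq_hscale: "- (x::'a::chilbert) = hscale (-1) x"
  by (simp add: hscale_minus_left)

lemma hscale_Re_Im: "hscale c (z::'a::chilbert) = scaleR (Re c) z + scaleR (Im c) (hscale \<i> z)"
proof -
  have "c = complex_of_real (Re c) + complex_of_real (Im c) * \<i>"
    by (simp add: complex_eq_iff)
  then have "hscale c z = hscale (complex_of_real (Re c) + complex_of_real (Im c) * \<i>) z"
    by simp
  then show ?thesis by (simp add: hscale_add_left scaleR_hscale hscale_hscale)
qed

lemma hinner_zero_right [simp]: "hinner (x::'a::chilbert) 0 = 0"
  using hinner_add_right[of x 0 0] by simp

lemma hinner_zero_left [simp]: "hinner 0 (x::'a::chilbert) = 0"
  by (metis hinner_commute hinner_zero_right complex_cnj_zero)

lemma hinner_add_left: "hinner (x + y) (z::'a::chilbert) = hinner x z + hinner y z"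
  by (metis hinner_commute hinner_add_right complex_cnj_add)

lemma hinner_hscale_left: "hinner (hscale c x) (y::'a::chilbert) = cnj c * hinner x y"
  by (metis hinner_commute hinner_hscale_right complex_cnj_mult)

lemma hinner_diff_right: "hinner x (y - z::'a::chilbert) = hinner x y - hinner x z"
  using hinner_add_right[of x "y - z" z] by (simp add: eq_diff_eq)

lemma hinner_diff_left: "hinner (x - y) (z::'a::chilbert) = hinner x z - hinner y z"
  using hinner_add_left[of "x - y" y z] by (simp add: eq_diff_eq)

lemma hinner_scaleR_left: "hinner (scaleR a x) (y::'a::chilbert) = complex_of_real a * hinner x y"
  by (simp add: scaleR_hscale hinner_hscale_left)

lemma hinner_scaleR_right: "hinner x (scaleR a y) = complex_of_real a * hinner x (y::'a::chilbert)"
  by (simp add: scaleR_hscale hinner_hscale_right)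

lemmas hinner_simps = hinner_add_left hinner_add_right hinner_diff_left hinner_diff_right
  hinner_hscale_left hinner_hscale_right

lemma hinner_self_eq_zero [simp]: "hinner x x = 0 \<longleftrightarrow> (x::'a::chilbert) = 0"
  by (simp add: hinner_norm)

lemma norm_sq_eq_Re_hinner: "(norm (x::'a::chilbert))\<^sup>2 = Re (hinner x x)"
  by (simp add: hinner_norm)

lemma norm_hscale: "norm (hscale c (x::'a::chilbert)) = cmod c * norm x"
proof -
  have "(norm (hscale c x))\<^sup>2 = Re (c * (cnj c * hinner x x))"
    by (simp only: norm_sq_eq_Re_hinner hinner_hscale_left hinner_hscale_right)
  also have "\<dots> = (cmod c * norm x)\<^sup>2"
    by (simp add: hinner_norm mult.assoc[symmetric] complex_norm_square[symmetric]
        power_mult_distrib del: of_real_power)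
  finally show ?thesis by (simp add: power2_eq_iff_nonneg)
qed

lemma hscale_eq_zero_iff: "hscale c (x::'a::chilbert) = 0 \<longleftrightarrow> c = 0 \<or> x = 0"
  using norm_hscale[of c x] by (metis mult_eq_0_iff norm_eq_zero)

lemma norm_add_sq: "(norm (x + y))\<^sup>2 = (norm x)\<^sup>2 + (norm y)\<^sup>2 + 2 * Re (hinner x (y::'a::chilbert))"
  using hinner_commute[of y x] by (simp add: norm_sq_eq_Re_hinner hinner_simps)

lemma norm_diff_sq: "(norm (x - y))\<^sup>2 = (norm x)\<^sup>2 + (norm y)\<^sup>2 - 2 * Re (hinner x (y::'a::chilbert))"
  using hinner_commute[of y x] by (simp add: norm_sq_eq_Re_hinner hinner_simps)

lemma norm_diff_real_combination_sq:
  fixes u p q :: "'a::chilbert"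
  shows "(norm (u - (scaleR a p + scaleR b q)))\<^sup>2 = (norm u)\<^sup>2 + a\<^sup>2 * (norm p)\<^sup>2 + b\<^sup>2 * (norm q)\<^sup>2
     - 2 * a * Re (hinner u p) - 2 * b * Re (hinner u q) + 2 * a * b * Re (hinner p q)"
proof -
  have "(norm (scaleR a p + scaleR b q))\<^sup>2
      = a\<^sup>2 * (norm p)\<^sup>2 + b\<^sup>2 * (norm q)\<^sup>2 + 2 * a * b * Re (hinner p q)"
    by (simp add: norm_add_sq hinner_scaleR_left hinner_scaleR_right power_mult_distrib)
  moreover have "Re (hinner u (scaleR a p + scaleR b q)) = a * Re (hinner u p) + b * Re (hinner u q)"
    by (simp add: hinner_add_right hinner_scaleR_right)
  ultimately show ?thesis by (simp add: norm_diff_sq algebra_simps)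
qed

lemma Re_eq_if_cmod_eq:
  assumes "cmod p = cmod q" "cmod (p - 1) = cmod (q - 1)"
  shows "Re p = Re q"
proof -
  have "(Re p)\<^sup>2 + (Im p)\<^sup>2 = (Re q)\<^sup>2 + (Im q)\<^sup>2" using assms(1) by (metis cmod_power2)
  moreover have "(Re p - 1)\<^sup>2 + (Im p)\<^sup>2 = (Re q - 1)\<^sup>2 + (Im q)\<^sup>2"
    using assms(2) cmod_power2[of "p - 1"] cmod_power2[of "q - 1"] by simp
  ultimately show ?thesis by (simp add: power2_eq_square algebra_simps)
qed

lemma norm_diff_component_sq:
  fixes x y :: "'a::chilbert"
  assumes "x \<noteq> 0"
  shows "(norm (y - hscale (hinner x y / complex_of_real ((norm x)\<^sup>2)) x))\<^sup>2
     = (norm y)\<^sup>2 - (cmod (hinner x y))\<^sup>2 / (norm x)\<^sup>2"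
proof -
  define a where "a = hinner x y"
  define n where "n = (norm x)\<^sup>2"
  have n: "n > 0" using assms by (simp add: n_def)
  define c where "c = a / complex_of_real n"
  have "hinner y (hscale c x) = a * cnj a / complex_of_real n"
    by (simp add: hinner_hscale_right a_def hinner_commute[of x y] c_def)
  then have "hinner y (hscale c x) = complex_of_real ((cmod a)\<^sup>2 / n)"
    by (simp only: complex_norm_square of_real_divide)
  moreover have "(cmod c * norm x)\<^sup>2 = (cmod a)\<^sup>2 / n"
  proof -
    have "cmod c = cmod a / n" using n by (simp add: c_def norm_divide)
    then show ?thesis using n by (simp add: power_mult_distrib n_def power2_eq_square)
  qed
  ultimately have "(norm (y - hscale c x))\<^sup>2 = (norm y)\<^sup>2 - (cmod a)\<^sup>2 / n"
    by (simp add: norm_diff_sq norm_hscale)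
  then show ?thesis by (simp add: a_def n_def c_def)
qed

lemma cauchy_schwarz: "cmod (hinner x y) \<le> norm x * norm (y::'a::chilbert)"
proof (cases "x = 0")
  case False
  from norm_diff_component_sq[OF False, of y]
  have "(cmod (hinner x y))\<^sup>2 / (norm x)\<^sup>2 \<le> (norm y)\<^sup>2" by (metis diff_ge_0_iff_ge zero_le_power2)
  then have "(cmod (hinner x y))\<^sup>2 \<le> (norm x * norm y)\<^sup>2"
    using False by (simp add: field_simps power_mult_distrib)
  then show ?thesis by (simp add: power2_le_iff_abs_le)
qed simp

lemma cauchy_schwarz_eq_imp_parallel:
  fixes x y :: "'a::chilbert"
  assumes "x \<noteq> 0" and "cmod (hinner x y) = norm x * norm y"
  shows "y = hscale (hinner x y / complex_of_real ((norm x)\<^sup>2)) x"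
proof -
  have "(norm (y - hscale (hinner x y / complex_of_real ((norm x)\<^sup>2)) x))\<^sup>2 = 0"
    using norm_diff_component_sq[OF assms(1), of y] assms by (simp add: power_mult_distrib)
  then show ?thesis by simp
qed

lemma bounded_linear_hinner_hscale: "bounded_linear (\<lambda>x. hscale (hinner a x) (b::'b::chilbert))"
proof (rule bounded_linear_intro[where K="norm a * norm b"])
  fix x show "norm (hscale (hinner a x) b) \<le> norm x * (norm a * norm b)"
    using mult_right_mono[OF cauchy_schwarz[of a x], of "norm b"] by (simp add: norm_hscale mult_ac)
qed (simp_all add: hinner_add_right hscale_add_left hinner_hscale_right scaleR_hscale hscale_hscale)

lemma closed_hscale_hinner_fixpoints:
  "closed {x::'a::chilbert. x = (\<Sum>v\<in>B. hscale (hinner v x) v)}"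
  by (intro closed_Collect_eq continuous_on_id continuous_on_sum
      bounded_linear.continuous_on[OF bounded_linear_hinner_hscale])

lemma Lsub_zero: "S \<in> Lsub \<Longrightarrow> 0 \<in> S"
  and Lsub_add: "S \<in> Lsub \<Longrightarrow> x \<in> S \<Longrightarrow> y \<in> S \<Longrightarrow> x + y \<in> S"
  and Lsub_hscale: "S \<in> Lsub \<Longrightarrow> x \<in> S \<Longrightarrow> hscale c x \<in> S"
  and Lsub_closed: "S \<in> Lsub \<Longrightarrow> closed S"
  by (simp_all add: Lsub_def)

lemma Lsub_diff: "S \<in> Lsub \<Longrightarrow> x \<in> S \<Longrightarrow> y \<in> S \<Longrightarrow> x - y \<in> S"
  by (metis Lsub_add Lsub_hscale minus_eq_hscale diff_conv_add_uminus)

lemma Lsub_scaleR: "S \<in> Lsub \<Longrightarrow> x \<in> S \<Longrightarrow> scaleR r x \<in> S"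
  by (metis Lsub_hscale scaleR_hscale)

lemma LsubI:
  assumes "closed S" "0 \<in> S" "\<And>x y. x \<in> S \<Longrightarrow> y \<in> S \<Longrightarrow> x + y \<in> S"
    "\<And>c x. x \<in> S \<Longrightarrow> hscale c x \<in> S"
  shows "S \<in> Lsub"
  using assms by (simp add: Lsub_def)

lemma Lsub_parallelogram_bound:
  fixes S :: "'a::chilbert set"
  assumes S: "S \<in> Lsub" and d: "0 \<le> d" "\<And>s. s \<in> S \<Longrightarrow> d \<le> norm (\<psi> - s)"
    and "s \<in> S" "t \<in> S"
  shows "(norm (s - t))\<^sup>2 \<le> 2 * (norm (\<psi> - s))\<^sup>2 + 2 * (norm (\<psi> - t))\<^sup>2 - 4 * d\<^sup>2"
proof -
  have "scaleR (1/2) (s + t) \<in> S" using assms by (simp add: Lsub_add Lsub_scaleR)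
  moreover have "(\<psi> - s) + (\<psi> - t) = scaleR 2 (\<psi> - scaleR (1/2) (s + t))"
    by (simp add: algebra_simps scaleR_2)
  ultimately have "(2 * d)\<^sup>2 \<le> (norm ((\<psi> - s) + (\<psi> - t)))\<^sup>2"
    using d by (intro power_mono) auto
  moreover have "(norm ((\<psi> - s) - (\<psi> - t)))\<^sup>2 + (norm ((\<psi> - s) + (\<psi> - t)))\<^sup>2
      = 2 * (norm (\<psi> - s))\<^sup>2 + 2 * (norm (\<psi> - t))\<^sup>2"
    using norm_add_sq[of "\<psi> - s" "\<psi> - t"] norm_diff_sq[of "\<psi> - s" "\<psi> - t"] by linarith
  ultimately show ?thesis by (simp add: power_mult_distrib norm_minus_commute)
qed

lemma Lsub_minimizing_sequence_Cauchy:
  fixes S :: "'a::chilbert set"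
  assumes S: "S \<in> Lsub" and d: "0 \<le> d" "\<And>s. s \<in> S \<Longrightarrow> d \<le> norm (\<psi> - s)"
    and f: "\<And>n. f n \<in> S" "\<And>n. (norm (\<psi> - f n))\<^sup>2 < d\<^sup>2 + 1 / real (Suc n)"
  shows "Cauchy f"
proof (rule CauchyI)
  fix \<epsilon> :: real assume \<epsilon>: "0 < \<epsilon>"
  obtain M where "4 / \<epsilon>\<^sup>2 < real M" using reals_Archimedean2 by blast
  then have M: "4 < \<epsilon>\<^sup>2 * real (Suc M)"
    using \<epsilon> by (simp add: field_simps add_pos_pos add.commute add_strict_increasing)
  have "norm (f m - f n) < \<epsilon>" if "M \<le> m" "M \<le> n" for m n
  proof -
    have "(norm (f m - f n))\<^sup>2 \<le> 2 * (norm (\<psi> - f m))\<^sup>2 + 2 * (norm (\<psi> - f n))\<^sup>2 - 4 * d\<^sup>2"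
      using f(1) by (intro Lsub_parallelogram_bound[OF S d])
    also have "\<dots> < 2 / real (Suc m) + 2 / real (Suc n)"
      using f(2)[of m] f(2)[of n] by simp
    also have "\<dots> \<le> 2 / real (Suc M) + 2 / real (Suc M)"
      using that by (intro add_mono divide_left_mono) auto
    also have "\<dots> = 4 / real (Suc M)" by simp
    also have "\<dots> < \<epsilon>\<^sup>2" using M by (simp add: pos_divide_less_eq del: of_nat_Suc)
    finally show ?thesis using \<epsilon> by (simp add: power_less_imp_less_base)
  qed
  then show "\<exists>M. \<forall>m\<ge>M. \<forall>n\<ge>M. norm (f m - f n) < \<epsilon>" by blast
qed

lemma Lsub_nearest_point:
  fixes S :: "'a::chilbert set"
  assumes S: "S \<in> Lsub"
  obtains p where "p \<in> S" "\<And>s. s \<in> S \<Longrightarrow> norm (\<psi> - p) \<le> norm (\<psi> - s)"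
proof -
  define d where "d = Inf ((\<lambda>s. norm (\<psi> - s)) ` S)"
  have ne: "(\<lambda>s. norm (\<psi> - s)) ` S \<noteq> {}" using Lsub_zero[OF S] by auto
  have "bdd_below ((\<lambda>s. norm (\<psi> - s)) ` S)" by (rule bdd_belowI[of _ 0]) auto
  then have dle: "d \<le> norm (\<psi> - s)" if "s \<in> S" for s
    unfolding d_def using that by (auto intro: cInf_lower)
  have d0: "0 \<le> d" unfolding d_def using ne by (auto intro: cInf_greatest)
  have "\<exists>s\<in>S. (norm (\<psi> - s))\<^sup>2 < d\<^sup>2 + 1 / real (Suc n)" for n
  proof -
    have "d < sqrt (d\<^sup>2 + 1 / real (Suc n))" by (intro real_less_rsqrt) simp
    then obtain s where s: "s \<in> S" "norm (\<psi> - s) < sqrt (d\<^sup>2 + 1 / real (Suc n))"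
      using cInf_lessD[OF ne] unfolding d_def by force
    then have "(norm (\<psi> - s))\<^sup>2 < (sqrt (d\<^sup>2 + 1 / real (Suc n)))\<^sup>2"
      by (intro power_strict_mono) auto
    then show ?thesis using s(1) by auto
  qed
  then obtain f where f: "\<And>n. f n \<in> S" "\<And>n. (norm (\<psi> - f n))\<^sup>2 < d\<^sup>2 + 1 / real (Suc n)"
    by metis
  obtain p where p: "f \<longlonglongrightarrow> p"
    using Lsub_minimizing_sequence_Cauchy[OF S d0 dle f] Cauchy_convergent_iff convergent_def by blast
  have "(norm (\<psi> - p))\<^sup>2 \<le> d\<^sup>2 + 0"
  proof (rule LIMSEQ_le)
    show "(\<lambda>n. (norm (\<psi> - f n))\<^sup>2) \<longlonglongrightarrow> (norm (\<psi> - p))\<^sup>2" by (intro tendsto_intros p)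
    show "(\<lambda>n. d\<^sup>2 + 1 / real (Suc n)) \<longlonglongrightarrow> d\<^sup>2 + 0"
      by (intro tendsto_intros LIMSEQ_inverse_real_of_nat[unfolded inverse_eq_divide])
  qed (use f(2) less_imp_le in blast)
  then have "norm (\<psi> - p) \<le> d" using d0 by (simp add: power2_le_iff_abs_le)
  then show thesis
    using that closed_sequentially[OF Lsub_closed[OF S] f(1) p] dle by force
qed

lemma nearest_point_orthogonal:
  fixes S :: "'a::chilbert set"
  assumes S: "S \<in> Lsub" and p: "p \<in> S" "\<And>s. s \<in> S \<Longrightarrow> norm (\<psi> - p) \<le> norm (\<psi> - s)"
    and s: "s \<in> S"
  shows "hinner s (\<psi> - p) = 0"
proof (cases "s = 0")
  case False
  define t where "t = hinner s (\<psi> - p) / complex_of_real ((norm s)\<^sup>2)"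
  have "p + hscale t s \<in> S" using S p s by (simp add: Lsub_add Lsub_hscale)
  from p(2)[OF this] have "(norm (\<psi> - p))\<^sup>2 \<le> (norm ((\<psi> - p) - hscale t s))\<^sup>2"
    by (simp add: diff_diff_eq)
  also have "\<dots> = (norm (\<psi> - p))\<^sup>2 - (cmod (hinner s (\<psi> - p)))\<^sup>2 / (norm s)\<^sup>2"
    unfolding t_def by (rule norm_diff_component_sq[OF False])
  finally show ?thesis using False by (simp add: divide_le_0_iff)
qed simp

lemma proj_characterization:
  fixes S :: "'a::chilbert set"
  assumes S: "S \<in> Lsub"
  shows "\<exists>!p. p \<in> S \<and> (\<forall>s\<in>S. hinner s (\<psi> - p) = 0)"
proof (rule ex_ex1I)
  obtain p where "p \<in> S" "\<And>s. s \<in> S \<Longrightarrow> norm (\<psi> - p) \<le> norm (\<psi> - s)"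
    using Lsub_nearest_point[OF S] by blast
  then show "\<exists>p. p \<in> S \<and> (\<forall>s\<in>S. hinner s (\<psi> - p) = 0)"
    using nearest_point_orthogonal[OF S] by blast
next
  fix p q assume p: "p \<in> S \<and> (\<forall>s\<in>S. hinner s (\<psi> - p) = 0)"
    and q: "q \<in> S \<and> (\<forall>s\<in>S. hinner s (\<psi> - q) = 0)"
  then have "hinner (p - q) (\<psi> - q) - hinner (p - q) (\<psi> - p) = 0"
    using Lsub_diff[OF S] by simp
  then have "hinner (p - q) (p - q) = 0" by (simp add: hinner_diff_right)
  then show "p = q" by simp
qed

lemma proj_in: "S \<in> Lsub \<Longrightarrow> proj S \<psi> \<in> S"
  and proj_orthogonal: "S \<in> Lsub \<Longrightarrow> s \<in> S \<Longrightarrow> hinner s (\<psi> - proj S \<psi>) = 0"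
  using theI'[OF proj_characterization, of S \<psi>] by (auto simp: proj_def)

lemma proj_eqI:
  assumes "S \<in> Lsub" "p \<in> S" "\<And>s. s \<in> S \<Longrightarrow> hinner s (\<psi> - p) = 0"
  shows "proj S \<psi> = (p::'a::chilbert)"
  using proj_characterization[OF assms(1)] proj_in[OF assms(1)] proj_orthogonal[OF assms(1)] assms
  by blast

lemma norm_sq_proj_add:
  assumes "S \<in> Lsub"
  shows "(norm \<psi>)\<^sup>2 = (norm (proj S \<psi>))\<^sup>2 + (norm (\<psi> - proj S \<psi>))\<^sup>2"
  using norm_add_sq[of "proj S \<psi>" "\<psi> - proj S \<psi>"] proj_orthogonal[OF assms proj_in[OF assms]]
  by simp

lemma norm_proj_eq_iff:
  assumes S: "S \<in> Lsub"
  shows "(norm (proj S \<psi>))\<^sup>2 = (norm \<psi>)\<^sup>2 \<longleftrightarrow> \<psi> \<in> S"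
proof
  assume "(norm (proj S \<psi>))\<^sup>2 = (norm \<psi>)\<^sup>2"
  then have "\<psi> = proj S \<psi>" using norm_sq_proj_add[OF S, of \<psi>] by simp
  then show "\<psi> \<in> S" using proj_in[OF S] by metis
qed (simp add: proj_eqI[OF S])

lemma proj_hscale:
  assumes S: "S \<in> Lsub"
  shows "proj S (hscale c \<psi>) = hscale c (proj S (\<psi>::'a::chilbert))"
  using S proj_in[OF S] proj_orthogonal[OF S]
  by (intro proj_eqI) (simp_all add: Lsub_hscale hinner_hscale_right flip: hscale_diff_right)

section \<open>Rays and the evaluation \<open>ebar\<close>\<close>

lemma mem_ray: "x \<in> ray \<psi> \<longleftrightarrow> (\<exists>l. x = hscale l \<psi>)"
  by (auto simp: ray_def)

lemma self_in_ray: "(\<psi>::'a::chilbert) \<in> ray \<psi>"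
  by (metis mem_ray hscale_one)

lemma ray_hscale:
  assumes "c \<noteq> 0"
  shows "ray (hscale c \<psi>) = ray (\<psi>::'a::chilbert)"
proof
  show "ray (hscale c \<psi>) \<subseteq> ray \<psi>" by (auto simp: mem_ray hscale_hscale)
  show "ray \<psi> \<subseteq> ray (hscale c \<psi>)"
  proof
    fix x assume "x \<in> ray \<psi>"
    then obtain l where "x = hscale l \<psi>" by (auto simp: mem_ray)
    then have "x = hscale (l / c) (hscale c \<psi>)" using assms by (simp add: hscale_hscale)
    then show "x \<in> ray (hscale c \<psi>)" by (auto simp: mem_ray)
  qed
qed

lemma in_ray_imp_ray_eq:
  assumes "\<phi> \<noteq> 0" "\<phi> \<in> ray \<psi>"
  shows "ray \<phi> = ray (\<psi>::'a::chilbert)"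
  using assms by (metis mem_ray ray_hscale hscale_zero_left)

lemma ray_eq_iff:
  assumes "\<phi> \<noteq> 0"
  shows "ray \<phi> = ray \<psi> \<longleftrightarrow> (\<exists>c. c \<noteq> 0 \<and> \<phi> = hscale c (\<psi>::'a::chilbert))"
  using assms in_ray_imp_ray_eq ray_hscale self_in_ray by (metis mem_ray hscale_zero_left)

lemma ray_subset_imp_eq:
  assumes "\<phi> \<noteq> 0" "ray \<phi> \<subseteq> ray (\<psi>::'a::chilbert)"
  shows "ray \<phi> = ray \<psi>"
  using assms in_ray_imp_ray_eq self_in_ray by blast

lemma ray_in_rays: "(\<psi>::'a::chilbert) \<noteq> 0 \<Longrightarrow> ray \<psi> \<in> rays"
  by (auto simp: rays_def)

lemma rep_nonzero: "r \<in> (rays :: 'a::chilbert set set) \<Longrightarrow> rep r \<noteq> 0"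
  and ray_rep: "r \<in> (rays :: 'a::chilbert set set) \<Longrightarrow> ray (rep r) = r"
  using someI_ex[of "\<lambda>\<psi>::'a. \<psi> \<noteq> 0 \<and> r = ray \<psi>"] by (auto simp: rays_def rep_def)

lemma rep_ray:
  assumes "\<psi> \<noteq> 0"
  obtains c where "c \<noteq> 0" "rep (ray \<psi>) = hscale c (\<psi>::'a::chilbert)"
  using ray_eq_iff rep_nonzero ray_rep ray_in_rays assms by metis

definition unit_vec :: "'a::chilbert \<Rightarrow> 'a" where
  "unit_vec \<psi> = hscale (complex_of_real (1 / norm \<psi>)) \<psi>"

lemma norm_unit_vec: "\<psi> \<noteq> 0 \<Longrightarrow> norm (unit_vec \<psi>) = 1"
  by (simp add: unit_vec_def norm_hscale norm_divide)

lemma ray_unit_vec: "\<psi> \<noteq> 0 \<Longrightarrow> ray (unit_vec \<psi>) = ray \<psi>"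
  by (simp add: unit_vec_def ray_hscale)

lemma closed_ray: "closed (ray (\<psi>::'a::chilbert))"
proof (cases "\<psi> = 0")
  case True
  then show ?thesis by (simp add: ray_def)
next
  case False
  define u where "u = unit_vec \<psi>"
  have "norm u = 1" "ray u = ray \<psi>" using norm_unit_vec[OF False] ray_unit_vec[OF False] by (auto simp: u_def)
  moreover have "ray u = {x. x = (\<Sum>v\<in>{u}. hscale (hinner v x) v)}"
    using \<open>norm u = 1\<close> by (auto simp: mem_ray hinner_hscale_right hinner_norm)
  ultimately show ?thesis using closed_hscale_hinner_fixpoints[of "{u}"] by metis
qed

lemma ray_Lsub: "ray \<psi> \<in> Lsub"
proof (rule LsubI[OF closed_ray])
  show "0 \<in> ray \<psi>" using hscale_zero_left mem_ray by metis
qed (auto simp: mem_ray hscale_hscale hscale_add_left[symmetric])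

lemma rays_Lsub: "r \<in> (rays :: 'a::chilbert set set) \<Longrightarrow> r \<in> Lsub"
  by (auto simp: rays_def ray_Lsub)

lemma proj_ray_unit:
  assumes u: "norm u = 1"
  shows "proj (ray u) x = hscale (hinner u x) (u::'a::chilbert)"
  using u by (intro proj_eqI ray_Lsub) (auto simp: mem_ray hinner_simps hinner_norm)

lemma ebar_ray:
  assumes "\<psi> \<noteq> 0" "S \<in> Lsub"
  shows "ebar (ray \<psi>) S = (norm (proj S \<psi>))\<^sup>2 / (norm (\<psi>::'a::chilbert))\<^sup>2"
proof -
  obtain c where "c \<noteq> 0" "rep (ray \<psi>) = hscale c \<psi>" using rep_ray[OF assms(1)] .
  then show ?thesis
    by (simp add: ebar_def proj_hscale[OF assms(2)] norm_hscale power_mult_distrib)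
qed

lemma ebar_in_unit_interval:
  assumes "\<psi> \<noteq> 0" "S \<in> Lsub"
  shows "ebar (ray \<psi>) S \<in> {0..1}"
proof -
  have "(norm (proj S \<psi>))\<^sup>2 \<le> (norm \<psi>)\<^sup>2" using norm_sq_proj_add[OF assms(2), of \<psi>] by simp
  then show ?thesis using ebar_ray[OF assms] assms(1) by simp
qed

lemma ebar_eq_1_iff:
  assumes "\<psi> \<noteq> 0" "S \<in> Lsub"
  shows "ebar (ray \<psi>) S = 1 \<longleftrightarrow> \<psi> \<in> S"
  using ebar_ray[OF assms] norm_proj_eq_iff[OF assms(2), of \<psi>] assms(1) by auto

lemma ebar_eq_1_iff_ray_subset:
  assumes "\<psi> \<noteq> 0" "S \<in> Lsub"
  shows "ebar (ray \<psi>) S = 1 \<longleftrightarrow> ray \<psi> \<subseteq> S"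
  using ebar_eq_1_iff[OF assms] assms(2) self_in_ray[of \<psi>]
  by (auto simp: ray_def intro: Lsub_hscale)

definition trans_prob :: "'a::chilbert \<Rightarrow> 'a \<Rightarrow> real" where
  "trans_prob x y = (cmod (hinner x y))\<^sup>2 / ((norm x)\<^sup>2 * (norm y)\<^sup>2)"

lemma trans_prob_eq_0_iff:
  "x \<noteq> 0 \<Longrightarrow> y \<noteq> 0 \<Longrightarrow> trans_prob x y = 0 \<longleftrightarrow> hinner x (y::'a::chilbert) = 0"
  by (simp add: trans_prob_def)

lemma ebar_ray_ray:
  assumes "\<psi> \<noteq> 0" "\<phi> \<noteq> 0"
  shows "ebar (ray \<psi>) (ray \<phi>) = trans_prob \<phi> (\<psi>::'a::chilbert)"
proof -
  have "ebar (ray \<psi>) (ray \<phi>) = (cmod (hinner (unit_vec \<phi>) \<psi>))\<^sup>2 / (norm \<psi>)\<^sup>2"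
    using ebar_ray[OF assms(1) ray_Lsub] ray_unit_vec[OF assms(2)]
      proj_ray_unit[OF norm_unit_vec[OF assms(2)]] norm_unit_vec[OF assms(2)]
    by (simp add: norm_hscale)
  also have "\<dots> = trans_prob \<phi> \<psi>"
    by (simp add: unit_vec_def trans_prob_def hinner_hscale_left norm_mult norm_divide
        power_mult_distrib power_divide field_simps)
  finally show ?thesis .
qed

definition span2 :: "'a::chilbert \<Rightarrow> 'a \<Rightarrow> 'a set" where
  "span2 e f = {hscale a e + hscale b f | a b. True}"

definition orthonormal2 :: "'a::chilbert \<Rightarrow> 'a \<Rightarrow> bool" where
  "orthonormal2 e f \<longleftrightarrow> norm e = 1 \<and> norm f = 1 \<and> hinner e f = 0"

lemma span2_eq:
  assumes "orthonormal2 e f"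
  shows "span2 e f = {x. x = (\<Sum>v\<in>{e, f}. hscale (hinner v x) v)}"
proof -
  have "e \<noteq> f" and "hinner f e = 0"
    using assms hinner_commute[of f e] by (auto simp: orthonormal2_def hinner_norm)
  then show ?thesis
    using assms by (auto simp: span2_def orthonormal2_def hinner_simps hinner_norm)
qed

lemma span2_Lsub:
  assumes "orthonormal2 e f"
  shows "span2 e f \<in> Lsub"
proof (rule LsubI)
  show "closed (span2 e f)" unfolding span2_eq[OF assms] by (rule closed_hscale_hinner_fixpoints)
  show "0 \<in> span2 e f" by (auto simp: span2_def intro!: exI[of _ 0])
  show "x + y \<in> span2 e f" if xy: "x \<in> span2 e f" "y \<in> span2 e f" for x y
  proof -
    obtain a b a' b' where "x = hscale a e + hscale b f" "y = hscale a' e + hscale b' f"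
      using xy unfolding span2_def by blast
    then have "x + y = hscale (a + a') e + hscale (b + b') f"
      by (simp add: hscale_add_left algebra_simps)
    then show ?thesis unfolding span2_def by blast
  qed
  show "hscale c x \<in> span2 e f" if "x \<in> span2 e f" for c x
    using that unfolding span2_def by (clarsimp simp: hscale_add_right hscale_hscale) blast
qed

lemma norm_proj_span2:
  assumes on: "orthonormal2 e f"
  shows "(norm (proj (span2 e f) x))\<^sup>2 = (cmod (hinner e x))\<^sup>2 + (cmod (hinner f x))\<^sup>2"
proof -
  have fe: "hinner f e = 0" using on hinner_commute[of f e] by (simp add: orthonormal2_def)
  have "proj (span2 e f) x = hscale (hinner e x) e + hscale (hinner f x) f"
    using on fe by (intro proj_eqI span2_Lsub)
      (auto simp: span2_def orthonormal2_def hinner_simps hinner_norm algebra_simps)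
  then show ?thesis
    using on by (simp add: orthonormal2_def norm_add_sq norm_hscale hinner_simps)
qed

lemma ebar_ray_span2:
  assumes "\<psi> \<noteq> 0" "orthonormal2 e f"
  shows "ebar (ray \<psi>) (span2 e f) = trans_prob e \<psi> + trans_prob f \<psi>"
  using assms ebar_ray[OF assms(1) span2_Lsub[OF assms(2)]] norm_proj_span2[OF assms(2), of \<psi>]
  by (simp add: orthonormal2_def trans_prob_def add_divide_distrib)

lemma chu_space01_rays: "chu_space01 (rays :: 'a::chilbert set set) Lsub ebar"
  unfolding chu_space01_def using ebar_in_unit_interval rep_nonzero ray_rep by metis

lemma Lsub_subset_if_ebar_eq:
  assumes "S \<in> Lsub" "T \<in> Lsub" "\<And>r. r \<in> (rays :: 'a::chilbert set set) \<Longrightarrow> ebar r S = ebar r T"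
  shows "S \<subseteq> T"
proof
  fix v assume "v \<in> S"
  then show "v \<in> T"
    using assms ebar_eq_1_iff[of v S] ebar_eq_1_iff[of v T] ray_in_rays[of v] Lsub_zero[of T]
    by (cases "v = 0") auto
qed

lemma extensional_chu_rays: "extensional_chu (rays :: 'a::chilbert set set) Lsub ebar"
  unfolding extensional_chu_def using Lsub_subset_if_ebar_eq by (metis subset_antisym)

lemma separated_chu_rays: "separated_chu (rays :: 'a::chilbert set set) Lsub ebar"
  unfolding separated_chu_def
proof (intro ballI impI)
  fix r1 r2 :: "'a set" assume r: "r1 \<in> rays" "r2 \<in> rays" and eq: "\<forall>S\<in>Lsub. ebar r1 S = ebar r2 S"
  define \<psi>1 \<psi>2 where "\<psi>1 = rep r1" and "\<psi>2 = rep r2"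
  have \<psi>: "\<psi>1 \<noteq> 0" "\<psi>2 \<noteq> 0" "r1 = ray \<psi>1" "r2 = ray \<psi>2"
    using r rep_nonzero ray_rep by (auto simp: \<psi>1_def \<psi>2_def)
  have L: "ray \<psi>1 \<in> Lsub" by (rule ray_Lsub)
  have "ebar (ray \<psi>1) (ray \<psi>1) = 1" using ebar_eq_1_iff_ray_subset[OF \<psi>(1) L] by simp
  then have "ebar (ray \<psi>2) (ray \<psi>1) = 1" using eq L \<psi> by simp
  then have "ray \<psi>2 \<subseteq> ray \<psi>1" using ebar_eq_1_iff_ray_subset[OF \<psi>(2) L] by simp
  then show "r1 = r2" using ray_subset_imp_eq[OF \<psi>(2)] \<psi> by metis
qed

lemma biextensional_chu_rays: "biextensional_chu (rays :: 'a::chilbert set set) Lsub ebar"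
  by (simp add: biextensional_chu_def extensional_chu_rays separated_chu_rays)

section \<open>Semiunitary maps\<close>

definition id_or_cnj :: "(complex \<Rightarrow> complex) \<Rightarrow> bool" where
  "id_or_cnj \<sigma> \<longleftrightarrow> \<sigma> = id \<or> \<sigma> = cnj"

lemma id_or_cnj_simps:
  assumes "id_or_cnj \<sigma>"
  shows "\<sigma> (a + b) = \<sigma> a + \<sigma> b" "\<sigma> (a * b) = \<sigma> a * \<sigma> b"
    "\<sigma> (complex_of_real r) = complex_of_real r" "\<sigma> 0 = 0" "\<sigma> 1 = 1"
    "\<sigma> c = 0 \<longleftrightarrow> c = 0" "cmod (\<sigma> c) = cmod c" "\<sigma> (\<sigma> c) = c" "\<sigma> (cnj c) = cnj (\<sigma> c)"
  using assms by (auto simp: id_or_cnj_def)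

lemma semiunitaryE:
  assumes "semiunitary (U :: 'a::chilbert \<Rightarrow> 'b::chilbert)"
  obtains \<sigma> where "id_or_cnj \<sigma>" "bij U" "\<And>x y. U (x + y) = U x + U y"
    "\<And>l x. U (hscale l x) = hscale (\<sigma> l) (U x)" "\<And>x y. hinner (U x) (U y) = \<sigma> (hinner x y)"
  using assms unfolding semiunitary_def id_or_cnj_def by blast

lemma semiunitaryI:
  assumes "id_or_cnj \<sigma>" "bij U" "\<And>x y. U (x + y) = U x + U y"
    "\<And>l x. U (hscale l x) = hscale (\<sigma> l) (U x)" "\<And>x y. hinner (U x) (U y) = \<sigma> (hinner x y)"
  shows "semiunitary (U :: 'a::chilbert \<Rightarrow> 'b::chilbert)"
  using assms unfolding semiunitary_def id_or_cnj_def by blast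

context
  fixes U :: "'a::chilbert \<Rightarrow> 'b::chilbert"
  assumes U: "semiunitary U"
begin

lemma semiunitary_add: "U (x + y) = U x + U y"
  using U by (auto elim: semiunitaryE)

lemma semiunitary_zero: "U 0 = 0"
  using semiunitary_add[of 0 0] by simp

lemma semiunitary_diff: "U (x - y) = U x - U y"
  by (metis semiunitary_add diff_add_cancel eq_diff_eq)

lemma semiunitary_eq_iff: "U x = U y \<longleftrightarrow> x = y"
  using U by (auto elim!: semiunitaryE simp: bij_def inj_def)

lemma semiunitary_eq_0_iff: "U x = 0 \<longleftrightarrow> x = 0"
  using semiunitary_eq_iff semiunitary_zero by metis

lemma semiunitary_surj: "\<exists>x. U x = y"
  using U by (auto elim!: semiunitaryE simp: bij_def surj_def) metis

lemma norm_semiunitary: "norm (U x) = norm x"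
proof -
  obtain \<sigma> where \<sigma>: "id_or_cnj \<sigma>" "hinner (U x) (U x) = \<sigma> (hinner x x)"
    using U by (auto elim: semiunitaryE)
  then have "complex_of_real ((norm (U x))\<^sup>2) = complex_of_real ((norm x)\<^sup>2)"
    by (simp only: hinner_norm id_or_cnj_simps(3)[OF \<sigma>(1)])
  then have "(norm (U x))\<^sup>2 = (norm x)\<^sup>2" using of_real_eq_iff by blast
  then show ?thesis by (simp add: power2_eq_iff_nonneg)
qed

lemma semiunitary_hinner_eq_0_iff: "hinner (U x) (U y) = 0 \<longleftrightarrow> hinner x y = 0"
  using U by (auto elim!: semiunitaryE simp: id_or_cnj_simps(6))

lemma semiunitary_hscale_eq: "\<exists>d. hscale c (U x) = U (hscale d x) \<and> (c \<noteq> 0 \<longrightarrow> d \<noteq> 0)"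
proof -
  obtain \<sigma> where "id_or_cnj \<sigma>" "\<And>l x. U (hscale l x) = hscale (\<sigma> l) (U x)"
    using U by (auto elim: semiunitaryE)
  then show ?thesis using id_or_cnj_simps(6,8) by metis
qed

lemma ray_semiunitary_hscale:
  assumes "c \<noteq> 0"
  shows "ray (U (hscale c x)) = ray (U x)"
proof -
  obtain \<sigma> where "id_or_cnj \<sigma>" "U (hscale c x) = hscale (\<sigma> c) (U x)"
    using U by (metis semiunitaryE)
  then show ?thesis using assms ray_hscale id_or_cnj_simps(6) by metis
qed

lemma continuous_semiunitary: "continuous_on UNIV U"
proof -
  obtain \<sigma> where "id_or_cnj \<sigma>" "\<And>l x. U (hscale l x) = hscale (\<sigma> l) (U x)"
    using U by (auto elim: semiunitaryE)
  then have "bounded_linear U"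
    by (intro bounded_linear_intro[where K=1])
      (simp_all add: semiunitary_add norm_semiunitary scaleR_hscale id_or_cnj_simps(3))
  then show ?thesis using bounded_linear.continuous_on[OF _ continuous_on_id] by blast
qed

lemma vimage_semiunitary_Lsub:
  assumes S: "S \<in> Lsub"
  shows "U -` S \<in> Lsub"
proof (rule LsubI)
  show "closed (U -` S)"
    using closed_vimage[OF Lsub_closed[OF S] continuous_semiunitary] by simp
  show "0 \<in> U -` S" using S by (simp add: semiunitary_zero Lsub_zero)
  show "x + y \<in> U -` S" if "x \<in> U -` S" "y \<in> U -` S" for x y
    using that S by (simp add: semiunitary_add Lsub_add)
  show "hscale c x \<in> U -` S" if "x \<in> U -` S" for c x
    using that S U by (auto elim!: semiunitaryE intro: Lsub_hscale)
qed

lemma proj_vimage_semiunitary: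
  assumes S: "S \<in> Lsub"
  shows "U (proj (U -` S) \<psi>) = proj S (U \<psi>)"
proof -
  obtain q where q: "U q = proj S (U \<psi>)" using semiunitary_surj by blast
  have "proj (U -` S) \<psi> = q"
  proof (rule proj_eqI[OF vimage_semiunitary_Lsub[OF S]])
    show "q \<in> U -` S" using q proj_in[OF S] by simp
    show "hinner s (\<psi> - q) = 0" if "s \<in> U -` S" for s
    proof -
      have "hinner (U s) (U \<psi> - U q) = 0" using that q proj_orthogonal[OF S] by simp
      then show ?thesis by (simp flip: semiunitary_hinner_eq_0_iff semiunitary_diff)
    qed
  qed
  then show ?thesis using q by simp
qed

lemma ebar_vimage_semiunitary:
  assumes r: "r \<in> rays" and S: "S \<in> Lsub"
  shows "ebar r (U -` S) = ebar (PU U r) S"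
proof -
  have "U (rep r) \<noteq> 0" using rep_nonzero[OF r] semiunitary_eq_0_iff by blast
  then show ?thesis
    using ebar_ray[OF rep_nonzero[OF r] vimage_semiunitary_Lsub[OF S]] ebar_ray[OF _ S]
      proj_vimage_semiunitary[OF S] norm_semiunitary ray_rep[OF r]
    by (metis PU_def)
qed

lemma inj_on_PU: "inj_on (PU U) rays"
proof (rule inj_onI)
  fix r1 r2 assume r: "r1 \<in> rays" "r2 \<in> rays" "PU U r1 = PU U r2"
  then obtain c where "c \<noteq> 0" "U (rep r1) = hscale c (U (rep r2))"
    using ray_eq_iff[of "U (rep r1)"] rep_nonzero semiunitary_eq_0_iff by (metis PU_def)
  then obtain d where "d \<noteq> 0" "rep r1 = hscale d (rep r2)"
    using semiunitary_hscale_eq[of c "rep r2"] semiunitary_eq_iff by metis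
  then show "r1 = r2" using r ray_rep ray_hscale by metis
qed

lemma semiunitary_bm_morph: "bm_morph rays Lsub ebar rays Lsub ebar (PU U) (vimage U)"
  unfolding bm_morph_def chu_morph_def
  using ray_in_rays rep_nonzero semiunitary_eq_0_iff vimage_semiunitary_Lsub
    ebar_vimage_semiunitary inj_on_PU
  by (metis PU_def)

lemma semiunitary_not_in_ray:
  assumes "y \<notin> ray x"
  shows "U y \<notin> ray (U x)"
  using assms semiunitary_hscale_eq semiunitary_eq_iff by (metis mem_ray)

end

section \<open>\<open>PR\<close> is a faithful functor\<close>

lemma chu_eq_su_equiv:
  fixes U V :: "'a::chilbert \<Rightarrow> 'b::chilbert"
  assumes "su_equiv U V"
  shows "chu_eq rays Lsub (PU U) (vimage U) (PU V) (vimage V)"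
proof -
  obtain l where l: "cmod l = 1" "\<And>x. U x = hscale l (V x)"
    using assms by (auto simp: su_equiv_def)
  then have "l \<noteq> 0" by auto
  then have "hscale l (V x) \<in> S \<longleftrightarrow> V x \<in> S" if "S \<in> Lsub" for S x
    using Lsub_hscale[OF that, of "hscale l (V x)" "1 / l"] Lsub_hscale[OF that, of "V x" l]
    by (auto simp: hscale_hscale)
  then show ?thesis
    using ray_hscale[OF \<open>l \<noteq> 0\<close>] by (auto simp: chu_eq_def PU_def l(2))
qed

lemma chu_eq_PU_id: "chu_eq (rays :: 'a::chilbert set set) Lsub (PU (id :: 'a \<Rightarrow> 'a)) (vimage id) id id"
  by (auto simp: chu_eq_def PU_def ray_rep)

lemma chu_eq_PU_comp:
  fixes U :: "'a::chilbert \<Rightarrow> 'b::chilbert" and V :: "'b \<Rightarrow> 'c::chilbert"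
  assumes "semiunitary U" "semiunitary V"
  shows "chu_eq rays Lsub (PU (V \<circ> U)) (vimage (V \<circ> U)) (PU V \<circ> PU U) (vimage U \<circ> vimage V)"
proof -
  have "PU (V \<circ> U) r = PU V (PU U r)" if r: "r \<in> rays" for r :: "'a set"
  proof -
    obtain c where "c \<noteq> 0" "rep (ray (U (rep r))) = hscale c (U (rep r))"
      using rep_ray rep_nonzero[OF r] semiunitary_eq_0_iff[OF assms(1)] by metis
    then show ?thesis by (simp add: PU_def ray_semiunitary_hscale[OF assms(2)])
  qed
  then show ?thesis by (auto simp: chu_eq_def)
qed

lemma PU_eq_imp_proportional:
  fixes U V :: "'a::chilbert \<Rightarrow> 'b::chilbert"
  assumes "semiunitary U" "semiunitary V" "PU U (ray x) = PU V (ray x)" "x \<noteq> 0"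
  obtains d where "U x = hscale d (V x)"
proof -
  obtain c where "c \<noteq> 0" "rep (ray x) = hscale c x" using rep_ray[OF assms(4)] .
  then have "ray (U x) = ray (V x)"
    using assms(3) by (simp add: PU_def ray_semiunitary_hscale[OF assms(1)]
        ray_semiunitary_hscale[OF assms(2)])
  then show ?thesis using that ray_eq_iff semiunitary_eq_0_iff[OF assms(1)] assms(4) by metis
qed

lemma proportionality_factor_eq:
  fixes U V :: "'a::chilbert \<Rightarrow> 'b::chilbert"
  assumes U: "semiunitary U" and V: "semiunitary V" and x: "x \<noteq> 0" and y: "y \<notin> ray x"
    and a: "U x = hscale a (V x)" and b: "U y = hscale b (V y)" and c: "U (x + y) = hscale c (V (x + y))"
  shows "a = b"
proof -
  have "hscale c (V x + V y) = hscale a (V x) + hscale b (V y)"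
    using a b c semiunitary_add[OF U] semiunitary_add[OF V] by simp
  then have eq: "hscale (c - a) (V x) = hscale (b - c) (V y)"
    by (simp add: hscale_add_right hscale_diff_left algebra_simps)
  have "b = c"
  proof (rule ccontr)
    assume "b \<noteq> c"
    then have "V y = hscale ((c - a) / (b - c)) (V x)"
      using arg_cong[OF eq, of "hscale (1 / (b - c))"] by (simp add: hscale_hscale)
    then show False using semiunitary_not_in_ray[OF V y] by (auto simp: mem_ray)
  qed
  then have "hscale (c - a) (V x) = 0" using eq by simp
  then show ?thesis
    using \<open>b = c\<close> x semiunitary_eq_0_iff[OF V] by (simp add: hscale_eq_zero_iff)
qed

lemma dim_gt2_nonzero:
  assumes "dim_gt2 TYPE('a)"
  obtains x :: "'a::chilbert" where "x \<noteq> 0"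
  using assms unfolding dim_gt2_def by (metis add_0 hscale_one hscale_zero_left one_neq_zero)

lemma dim_gt2_not_in_ray:
  assumes "dim_gt2 TYPE('a)"
  obtains z :: "'a::chilbert" where "z \<notin> ray w"
proof (rule ccontr)
  assume "\<not> thesis"
  then have all: "z \<in> ray w" for z :: 'a using that by blast
  obtain x y z :: 'a where indep: "\<And>a b c. hscale a x + hscale b y + hscale c z = 0 \<Longrightarrow> a = 0 \<and> b = 0"
    using assms unfolding dim_gt2_def by blast
  obtain a b where ab: "x = hscale a w" "y = hscale b w" using all by (meson mem_ray)
  have "hscale b x + hscale (- a) y + hscale 0 z = 0"
    by (simp add: ab hscale_hscale hscale_minus_left mult.commute)
  then have "x = 0" using indep ab by fastforce
  then show False using indep[of 1 0 0] by simp
qed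

lemma PU_eq_imp_su_equiv:
  fixes U V :: "'a::chilbert \<Rightarrow> 'b::chilbert"
  assumes dim: "dim_gt2 TYPE('a)" and U: "semiunitary U" and V: "semiunitary V"
    and eq: "\<And>r. r \<in> rays \<Longrightarrow> PU U r = PU V r"
  shows "su_equiv U V"
proof -
  have "\<exists>c. U x = hscale c (V x)" if "x \<noteq> 0" for x
    using PU_eq_imp_proportional[OF U V eq[OF ray_in_rays[OF that]] that] by metis
  then obtain d where d: "\<And>x. x \<noteq> 0 \<Longrightarrow> U x = hscale (d x) (V x)" by metis
  have d_eq: "d x = d y" if x: "x \<noteq> 0" and y: "y \<notin> ray x" for x y
  proof (rule proportionality_factor_eq[OF U V x y])
    have "y \<noteq> 0" using y mem_ray hscale_zero_left by metis
    moreover have "x + y \<noteq> 0" using y mem_ray minus_eq_hscale add_eq_0_iff by metis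
    ultimately show "U x = hscale (d x) (V x)" "U y = hscale (d y) (V y)"
      "U (x + y) = hscale (d (x + y)) (V (x + y))"
      using d x by auto
  qed
  obtain x0 :: 'a where x0: "x0 \<noteq> 0" using dim_gt2_nonzero[OF dim] .
  obtain z :: 'a where z: "z \<notin> ray x0" using dim_gt2_not_in_ray[OF dim] .
  have "d x = d x0" if x: "x \<noteq> 0" for x
  proof (cases "x \<in> ray x0")
    case True
    then have "z \<notin> ray x" using z in_ray_imp_ray_eq[OF x] by simp
    then show ?thesis using d_eq[OF x] d_eq[OF x0 z] by simp
  qed (use d_eq[OF x0] in simp)
  then have U_eq: "U x = hscale (d x0) (V x)" for x
    using d semiunitary_zero[OF U] semiunitary_zero[OF V] by (cases "x = 0") auto
  have "norm x0 = cmod (d x0) * norm x0"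
    using arg_cong[OF U_eq[of x0], of norm] norm_semiunitary[OF U] norm_semiunitary[OF V]
    by (simp add: norm_hscale)
  then have "cmod (d x0) = 1" using x0 by simp
  then show ?thesis unfolding su_equiv_def using U_eq by blast
qed

section \<open>\<open>PR\<close> is full\<close>

locale bm_chu_morphism =
  fixes fs :: "'a::chilbert set \<Rightarrow> 'b::chilbert set" and fu :: "'b set \<Rightarrow> 'a set"
  assumes bm: "bm_morph rays Lsub ebar rays Lsub ebar fs fu"
begin

lemma fs_rays: "r \<in> rays \<Longrightarrow> fs r \<in> rays"
  and fu_Lsub: "S \<in> Lsub \<Longrightarrow> fu S \<in> Lsub"
  and ebar_fu: "r \<in> rays \<Longrightarrow> S \<in> Lsub \<Longrightarrow> ebar r (fu S) = ebar (fs r) S"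
  and fs_inj: "r1 \<in> rays \<Longrightarrow> r2 \<in> rays \<Longrightarrow> fs r1 = fs r2 \<Longrightarrow> r1 = r2"
  using bm by (auto simp: bm_morph_def chu_morph_def inj_on_def)

definition lift :: "'a \<Rightarrow> 'b" where
  "lift x = rep (fs (ray x))"

lemma lift_nonzero: "x \<noteq> 0 \<Longrightarrow> lift x \<noteq> 0"
  and ray_lift: "x \<noteq> 0 \<Longrightarrow> ray (lift x) = fs (ray x)"
  using rep_nonzero ray_rep fs_rays ray_in_rays by (metis lift_def)+

lemma ebar_ray_fu:
  assumes "x \<noteq> 0" "S \<in> Lsub"
  shows "ebar (ray x) (fu S) = ebar (ray (lift x)) S"
  using ebar_fu[OF ray_in_rays[OF assms(1)] assms(2)] ray_lift[OF assms(1)] by simp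

text \<open>The subspace \<open>fu (fs r)\<close> contains \<open>r\<close>, and any of its vectors orthogonal to \<open>r\<close> spans a ray
  that \<open>fs\<close> maps onto \<open>fs r\<close>, hence is zero by injectivity of \<open>fs\<close>.\<close>

lemma fu_fs:
  assumes r: "r \<in> rays"
  shows "fu (fs r) = r"
proof -
  have L': "fs r \<in> Lsub" using rays_Lsub[OF fs_rays[OF r]] .
  have F: "fu (fs r) \<in> Lsub" using fu_Lsub[OF L'] .
  have L: "r \<in> Lsub" using rays_Lsub[OF r] .
  have ebar_1: "ebar (ray \<psi>) (fu (fs r)) = 1 \<longleftrightarrow> fs (ray \<psi>) = fs r" if "\<psi> \<noteq> 0" for \<psi>
  proof -
    have "ebar (ray \<psi>) (fu (fs r)) = 1 \<longleftrightarrow> ray (lift \<psi>) \<subseteq> fs r"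
      using ebar_ray_fu[OF that L'] ebar_eq_1_iff_ray_subset[OF lift_nonzero[OF that] L'] by simp
    also have "\<dots> \<longleftrightarrow> fs (ray \<psi>) = fs r"
    proof -
      have "ray (lift \<psi>) \<subseteq> ray (rep (fs r)) \<longleftrightarrow> ray (lift \<psi>) = ray (rep (fs r))"
        using ray_subset_imp_eq[OF lift_nonzero[OF that]] by blast
      then show ?thesis using ray_lift[OF that] ray_rep[OF fs_rays[OF r]] by simp
    qed
    finally show ?thesis .
  qed
  have sub: "r \<subseteq> fu (fs r)"
    using ebar_1[OF rep_nonzero[OF r]] ebar_eq_1_iff_ray_subset[OF rep_nonzero[OF r] F] ray_rep[OF r]
    by simp
  have "x \<in> r" if x: "x \<in> fu (fs r)" for x
  proof -
    define x0 where "x0 = x - proj r x"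
    have "x0 \<in> fu (fs r)" unfolding x0_def using F x sub proj_in[OF L] by (blast intro: Lsub_diff)
    then have "x0 \<noteq> 0 \<Longrightarrow> ray x0 = r"
      using ebar_1 ebar_eq_1_iff[OF _ F] fs_inj[OF ray_in_rays r] by blast
    then have "x0 \<noteq> 0 \<Longrightarrow> hinner x0 x0 = 0"
      using proj_orthogonal[OF L] self_in_ray by (metis x0_def)
    then show "x \<in> r" using proj_in[OF L, of x] by (cases "x = proj r x") (auto simp: x0_def)
  qed
  then show ?thesis using sub by blast
qed

lemma trans_prob_lift:
  assumes "x \<noteq> 0" "y \<noteq> 0" "x' \<noteq> 0" "y' \<noteq> 0" "ray x' = fs (ray x)" "ray y' = fs (ray y)"
  shows "trans_prob x' y' = trans_prob x y"
proof -
  have r: "ray x \<in> rays" "ray y \<in> rays" using assms ray_in_rays by auto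
  have "ebar (ray y) (ray x) = ebar (ray y) (fu (fs (ray x)))" using fu_fs[OF r(1)] by simp
  also have "\<dots> = ebar (ray y') (ray x')"
    using ebar_fu[OF r(2) rays_Lsub[OF fs_rays[OF r(1)]]] assms by simp
  finally show ?thesis using ebar_ray_ray assms by metis
qed

end

text \<open>With a unit vector \<open>e\<close> and a unit vector \<open>e'\<close> in its image ray fixed, lifts of points
  \<open>x\<close> with \<open>\<langle>e, x\<rangle> = 1\<close> are normalised by \<open>\<langle>e', nlift x\<rangle> = 1\<close>; shifting by \<open>e\<close> and \<open>e'\<close> turns
  this into the map \<open>perp_lift\<close> between the orthogonal complements of \<open>e\<close> and \<open>e'\<close>.\<close>

locale bm_chu_morphism_based = bm_chu_morphism fs fu
  for fs :: "'a::chilbert set \<Rightarrow> 'b::chilbert set" and fu +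
  fixes e :: 'a and e' :: 'b
  assumes norm_e: "norm e = 1" and norm_e': "norm e' = 1" and ray_e': "ray e' = fs (ray e)"
begin

lemma e_nonzero: "e \<noteq> 0" and e'_nonzero: "e' \<noteq> 0"
  and hinner_e_e: "hinner e e = 1" and hinner_e'_e': "hinner e' e' = 1"
  using norm_e norm_e' by (auto simp: hinner_norm)

definition nlift :: "'a \<Rightarrow> 'b" where
  "nlift x = hscale (1 / hinner e' (lift x)) (lift x)"

definition e_perp :: "'a set" where
  "e_perp = {z. hinner e z = 0}"

definition perp_lift :: "'a \<Rightarrow> 'b" where
  "perp_lift z = nlift (z + e) - e'"

lemma trans_prob_e_lift:
  assumes "x \<noteq> 0"
  shows "trans_prob e' (lift x) = trans_prob e x"
  using trans_prob_lift[OF e_nonzero assms e'_nonzero lift_nonzero[OF assms] ray_e' ray_lift[OF assms]] .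

context
  fixes x assumes x: "hinner e x = 1"
begin

lemma nonzero_if_hinner_e: "x \<noteq> 0"
  using x by auto

lemma hinner_e'_lift_nonzero: "hinner e' (lift x) \<noteq> 0"
  using trans_prob_e_lift[OF nonzero_if_hinner_e] x nonzero_if_hinner_e
    trans_prob_eq_0_iff[OF e'_nonzero lift_nonzero[OF nonzero_if_hinner_e]]
    trans_prob_eq_0_iff[OF e_nonzero nonzero_if_hinner_e]
  by simp

lemma nlift_nonzero: "nlift x \<noteq> 0"
  using hinner_e'_lift_nonzero lift_nonzero[OF nonzero_if_hinner_e]
  by (simp add: nlift_def hscale_eq_zero_iff)

lemma ray_nlift: "ray (nlift x) = fs (ray x)"
  using hinner_e'_lift_nonzero ray_lift[OF nonzero_if_hinner_e] by (simp add: nlift_def ray_hscale)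

lemma hinner_e'_nlift: "hinner e' (nlift x) = 1"
  using hinner_e'_lift_nonzero by (simp add: nlift_def hinner_hscale_right)

lemma norm_nlift: "norm (nlift x) = norm x"
proof -
  have "trans_prob e' (nlift x) = trans_prob e x"
    using trans_prob_lift[OF e_nonzero nonzero_if_hinner_e e'_nonzero nlift_nonzero ray_e' ray_nlift] .
  then have "(norm (nlift x))\<^sup>2 = (norm x)\<^sup>2"
    using norm_e norm_e' x hinner_e'_nlift by (simp add: trans_prob_def)
  then show ?thesis by (simp add: power2_eq_iff_nonneg)
qed

end

lemma nlift_e: "nlift e = e'"
proof -
  obtain c where "c \<noteq> 0" "nlift e = hscale c e'"
    using ray_eq_iff[OF nlift_nonzero[OF hinner_e_e]] ray_nlift[OF hinner_e_e] ray_e' by metis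
  then show ?thesis using hinner_e'_nlift[OF hinner_e_e] hinner_e'_e' by (simp add: hinner_hscale_right)
qed

lemma cmod_hinner_nlift:
  assumes x: "hinner e x = 1" and y: "hinner e y = 1"
  shows "cmod (hinner (nlift x) (nlift y)) = cmod (hinner x y)"
proof -
  have "trans_prob (nlift x) (nlift y) = trans_prob x y"
    using x y by (intro trans_prob_lift nonzero_if_hinner_e nlift_nonzero ray_nlift)
  then have "(cmod (hinner (nlift x) (nlift y)))\<^sup>2 = (cmod (hinner x y))\<^sup>2"
    using x y nonzero_if_hinner_e by (simp add: trans_prob_def norm_nlift)
  then show ?thesis by (simp add: power2_eq_iff_nonneg)
qed

lemma hinner_e_add_e: "z \<in> e_perp \<Longrightarrow> hinner e (z + e) = 1"
  by (simp add: e_perp_def hinner_add_right hinner_e_e)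

lemma hinner_perp_e: "z \<in> e_perp \<Longrightarrow> hinner z e = 0"
  using hinner_commute[of z e] by (simp add: e_perp_def)

lemma hinner_e'_perp_lift: "z \<in> e_perp \<Longrightarrow> hinner e' (perp_lift z) = 0"
  using hinner_e'_nlift[OF hinner_e_add_e] hinner_e'_e' by (simp add: perp_lift_def hinner_diff_right)

lemma hinner_perp_lift_e': "z \<in> e_perp \<Longrightarrow> hinner (perp_lift z) e' = 0"
  using hinner_e'_perp_lift hinner_commute[of "perp_lift z" e'] by simp

lemma nlift_add_e: "nlift (z + e) = perp_lift z + e'"
  by (simp add: perp_lift_def)

lemma norm_perp_lift:
  assumes z: "z \<in> e_perp"
  shows "norm (perp_lift z) = norm z"
proof -
  have "(norm (perp_lift z))\<^sup>2 + 1 = (norm z)\<^sup>2 + 1"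
    using norm_add_sq[of "perp_lift z" e'] norm_add_sq[of z e] hinner_perp_lift_e'[OF z]
      hinner_perp_e[OF z] norm_e norm_e' norm_nlift[OF hinner_e_add_e[OF z]] nlift_add_e
    by simp
  then show ?thesis by (simp add: power2_eq_iff_nonneg)
qed

lemma perp_lift_zero: "perp_lift 0 = 0"
  by (simp add: perp_lift_def nlift_e)

text \<open>The case of equality in Cauchy--Schwarz: \<open>lift z\<close> is orthogonal to \<open>e'\<close> and has the same
  transition probability with \<open>nlift (z + e) = perp_lift z + e'\<close> as \<open>z\<close> has with \<open>z + e\<close>.\<close>

lemma ray_perp_lift:
  assumes z: "z \<in> e_perp" "z \<noteq> 0"
  shows "ray (perp_lift z) = fs (ray z)"
proof -
  define v where "v = lift z"
  have v: "v \<noteq> 0" "ray v = fs (ray z)" using lift_nonzero ray_lift z(2) by (auto simp: v_def)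
  have "trans_prob e' v = 0" using trans_prob_e_lift[OF z(2)] z(1) by (simp add: v_def trans_prob_def e_perp_def)
  then have e'v: "hinner e' v = 0" using trans_prob_eq_0_iff[OF e'_nonzero v(1)] by simp
  have ze: "hinner e (z + e) = 1" using hinner_e_add_e[OF z(1)] .
  have "trans_prob (nlift (z + e)) v = trans_prob (z + e) z"
    using trans_prob_lift[OF nonzero_if_hinner_e[OF ze] z(2) nlift_nonzero[OF ze] v(1) ray_nlift[OF ze] v(2)] .
  moreover have "hinner (nlift (z + e)) v = hinner (perp_lift z) v"
    using e'v nlift_add_e hinner_commute[of e' v] by (simp add: hinner_add_left)
  moreover have "hinner (z + e) z = complex_of_real ((norm z)\<^sup>2)"
    using z(1) by (simp add: e_perp_def hinner_add_left hinner_norm)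
  ultimately have "(cmod (hinner (perp_lift z) v))\<^sup>2 / ((norm (z + e))\<^sup>2 * (norm v)\<^sup>2)
      = ((norm z)\<^sup>2)\<^sup>2 / ((norm (z + e))\<^sup>2 * (norm z)\<^sup>2)"
    by (simp add: trans_prob_def norm_power norm_nlift[OF ze])
  then have "(cmod (hinner (perp_lift z) v))\<^sup>2 = (norm (perp_lift z) * norm v)\<^sup>2"
    using nonzero_if_hinner_e[OF ze] z(2) v(1) norm_perp_lift[OF z(1)]
    by (simp add: field_simps power2_eq_square)
  then have "cmod (hinner (perp_lift z) v) = norm (perp_lift z) * norm v"
    by (simp add: power2_eq_iff_nonneg)
  moreover have "perp_lift z \<noteq> 0" using norm_perp_lift[OF z(1)] z(2) by auto
  ultimately have "v = hscale (hinner (perp_lift z) v / complex_of_real ((norm (perp_lift z))\<^sup>2)) (perp_lift z)"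
    by (intro cauchy_schwarz_eq_imp_parallel)
  then have "ray v = ray (perp_lift z)" using v(1) ray_hscale hscale_zero_left by metis
  then show ?thesis using v(2) by simp
qed

text \<open>By extensionality, \<open>fu\<close> is determined on planes through \<open>e'\<close>: \<open>fs\<close> preserves transition
  probabilities with both spanning vectors.\<close>

lemma fu_span2:
  assumes f: "orthonormal2 e f" and f': "orthonormal2 e' f'" and ff: "ray f' = fs (ray f)"
  shows "fu (span2 e' f') = span2 e f"
proof -
  have f0: "f \<noteq> 0" and f'0: "f' \<noteq> 0" using f f' by (auto simp: orthonormal2_def)
  have "ebar r (fu (span2 e' f')) = ebar r (span2 e f)" if r: "r \<in> rays" for r
  proof -
    define z where "z = rep r"
    have z: "z \<noteq> 0" "r = ray z" using rep_nonzero[OF r] ray_rep[OF r] by (auto simp: z_def)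
    have "ebar r (fu (span2 e' f')) = trans_prob e' (lift z) + trans_prob f' (lift z)"
      using ebar_ray_fu[OF z(1) span2_Lsub[OF f']] ebar_ray_span2[OF lift_nonzero[OF z(1)] f'] z(2)
      by simp
    also have "\<dots> = trans_prob e z + trans_prob f z"
      using trans_prob_e_lift[OF z(1)] trans_prob_lift[OF f0 z(1) f'0 lift_nonzero[OF z(1)] ff ray_lift[OF z(1)]]
      by simp
    also have "\<dots> = ebar r (span2 e f)" using ebar_ray_span2[OF z(1) f] z(2) by simp
    finally show ?thesis .
  qed
  then show ?thesis
    using extensional_chu_rays fu_Lsub[OF span2_Lsub[OF f']] span2_Lsub[OF f]
    unfolding extensional_chu_def by blast
qed

lemma cmod_hinner_perp_lift_nlift:
  assumes z: "z \<in> e_perp" and y: "hinner e y = 1"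
  shows "cmod (hinner (perp_lift z) (nlift y)) = cmod (hinner z y)"
proof (cases "z = 0")
  case False
  define f f' where "f = unit_vec z" and "f' = unit_vec (perp_lift z)"
  have Gz: "perp_lift z \<noteq> 0" using norm_perp_lift[OF z] False by auto
  have on: "orthonormal2 e f" "orthonormal2 e' f'"
    using norm_e norm_e' norm_unit_vec[OF False] norm_unit_vec[OF Gz] z hinner_e'_perp_lift[OF z]
    by (auto simp: orthonormal2_def f_def f'_def unit_vec_def e_perp_def hinner_hscale_right)
  have "ray f' = fs (ray f)"
    using ray_perp_lift[OF z False] by (simp add: f_def f'_def ray_unit_vec[OF False] ray_unit_vec[OF Gz])
  then have "ebar (ray y) (span2 e f) = ebar (ray (nlift y)) (span2 e' f')"
    using ebar_fu[OF ray_in_rays[OF nonzero_if_hinner_e[OF y]] span2_Lsub[OF on(2)]]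
      fu_span2[OF on] ray_nlift[OF y] by simp
  then have "trans_prob f y = trans_prob f' (nlift y)"
    using ebar_ray_span2[OF nonzero_if_hinner_e[OF y] on(1)] ebar_ray_span2[OF nlift_nonzero[OF y] on(2)]
      trans_prob_e_lift[OF nonzero_if_hinner_e[OF y]] y hinner_e'_nlift[OF y] norm_nlift[OF y] norm_e norm_e'
    by (simp add: trans_prob_def)
  then have "(cmod (hinner f y))\<^sup>2 = (cmod (hinner f' (nlift y)))\<^sup>2"
    using nonzero_if_hinner_e[OF y] on norm_nlift[OF y] by (simp add: trans_prob_def orthonormal2_def)
  then show ?thesis
    using False Gz norm_perp_lift[OF z]
    by (simp add: f_def f'_def unit_vec_def hinner_hscale_left norm_mult norm_divide power2_eq_iff_nonneg)
qed (simp add: perp_lift_zero)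

lemma Re_hinner_nlift:
  assumes x: "hinner e x = 1" and y: "hinner e y = 1"
  shows "Re (hinner (nlift x) (nlift y)) = Re (hinner x y)"
proof (rule Re_eq_if_cmod_eq[OF cmod_hinner_nlift[OF x y]])
  have z: "x - e \<in> e_perp" using x hinner_e_e by (simp add: e_perp_def hinner_diff_right)
  have "hinner (perp_lift (x - e)) (nlift y) = hinner (nlift x) (nlift y) - 1"
    using nlift_add_e[of "x - e"] hinner_e'_nlift[OF y] by (simp add: hinner_add_left)
  moreover have "hinner (x - e) y = hinner x y - 1" using y by (simp add: hinner_diff_left)
  ultimately show "cmod (hinner (nlift x) (nlift y) - 1) = cmod (hinner x y - 1)"
    using cmod_hinner_perp_lift_nlift[OF z y] by simp
qed

lemma e_perp_add: "z \<in> e_perp \<Longrightarrow> y \<in> e_perp \<Longrightarrow> z + y \<in> e_perp"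
  and e_perp_hscale: "z \<in> e_perp \<Longrightarrow> hscale c z \<in> e_perp"
  and e_perp_scaleR: "z \<in> e_perp \<Longrightarrow> scaleR a z \<in> e_perp"
  by (simp_all add: e_perp_def hinner_add_right hinner_hscale_right hinner_scaleR_right)

lemma hinner_nlift_add_e:
  assumes "z \<in> e_perp" "y \<in> e_perp"
  shows "hinner (nlift (z + e)) (nlift (y + e)) = hinner (perp_lift z) (perp_lift y) + 1"
  using assms nlift_add_e hinner_e'_perp_lift hinner_perp_lift_e' hinner_e'_e'
  by (simp add: hinner_add_left hinner_add_right)

lemma hinner_add_e:
  assumes "z \<in> e_perp" "y \<in> e_perp"
  shows "hinner (z + e) (y + e) = hinner z y + 1"
  using assms hinner_perp_e hinner_e_e by (simp add: e_perp_def hinner_add_left hinner_add_right)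

lemma Re_hinner_perp_lift:
  assumes "z \<in> e_perp" "y \<in> e_perp"
  shows "Re (hinner (perp_lift z) (perp_lift y)) = Re (hinner z y)"
  using Re_hinner_nlift[OF hinner_e_add_e hinner_e_add_e] hinner_nlift_add_e hinner_add_e assms
  by (metis add_diff_cancel_right' minus_complex.sel(1))

text \<open>Expand the squared norm of the defect: only norms and real parts of inner products occur.\<close>

lemma perp_lift_real_linear:
  assumes z: "z \<in> e_perp" and y: "y \<in> e_perp"
  shows "perp_lift (scaleR a z + scaleR b y) = scaleR a (perp_lift z) + scaleR b (perp_lift y)"
proof -
  define w where "w = scaleR a z + scaleR b y"
  have w: "w \<in> e_perp" using z y by (simp add: w_def e_perp_add e_perp_scaleR)
  have "(norm (perp_lift w - (scaleR a (perp_lift z) + scaleR b (perp_lift y))))\<^sup>2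
      = (norm (w - (scaleR a z + scaleR b y)))\<^sup>2"
    unfolding norm_diff_real_combination_sq norm_perp_lift[OF w] norm_perp_lift[OF z]
      norm_perp_lift[OF y] Re_hinner_perp_lift[OF w z] Re_hinner_perp_lift[OF w y]
      Re_hinner_perp_lift[OF z y] ..
  then show ?thesis by (simp add: w_def)
qed

lemma perp_lift_add: "z \<in> e_perp \<Longrightarrow> y \<in> e_perp \<Longrightarrow> perp_lift (z + y) = perp_lift z + perp_lift y"
  using perp_lift_real_linear[of z y 1 1] by simp

lemma perp_lift_i:
  assumes z: "z \<in> e_perp"
  shows "perp_lift (hscale \<i> z) = hscale \<i> (perp_lift z) \<or> perp_lift (hscale \<i> z) = hscale (- \<i>) (perp_lift z)"
proof (cases "z = 0")
  case False
  have iz: "hscale \<i> z \<in> e_perp" using e_perp_hscale[OF z] .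
  define r where "r = (norm z)\<^sup>2"
  have r: "r > 0" using False by (simp add: r_def)
  define q where "q = hinner (perp_lift z) (perp_lift (hscale \<i> z))"
  have Re_q: "Re q = 0"
    unfolding q_def Re_hinner_perp_lift[OF z iz] by (simp add: hinner_hscale_right hinner_norm)
  have "cmod (q + 1) = cmod (\<i> * complex_of_real r + 1)"
    using cmod_hinner_nlift[OF hinner_e_add_e[OF z] hinner_e_add_e[OF iz]]
      hinner_nlift_add_e[OF z iz] hinner_add_e[OF z iz]
    by (simp add: q_def hinner_hscale_right hinner_norm r_def)
  then have "(cmod (q + 1))\<^sup>2 = (cmod (\<i> * complex_of_real r + 1))\<^sup>2" by simp
  then have "(Im q)\<^sup>2 = r\<^sup>2" using Re_q by (simp add: cmod_power2)
  then have Im_q: "Im q = r \<or> Im q = - r" by (simp add: power2_eq_iff)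
  have "cmod q = norm (perp_lift z) * norm (perp_lift (hscale \<i> z))"
    using Im_q Re_q r norm_perp_lift[OF z] norm_perp_lift[OF iz]
    by (auto simp: cmod_def norm_hscale r_def power2_eq_square)
  moreover have "perp_lift z \<noteq> 0" using norm_perp_lift[OF z] False by auto
  ultimately have "perp_lift (hscale \<i> z) = hscale (q / complex_of_real r) (perp_lift z)"
    using cauchy_schwarz_eq_imp_parallel[of "perp_lift z" "perp_lift (hscale \<i> z)"] norm_perp_lift[OF z]
    by (simp add: q_def r_def)
  moreover have "q / complex_of_real r = \<i> \<or> q / complex_of_real r = - \<i>"
    using Im_q Re_q r by (auto simp: complex_eq_iff)
  ultimately show ?thesis by auto
qed (simp add: perp_lift_zero)

text \<open>The sign in \<open>perp_lift_i\<close> cannot vary: mixed signs at \<open>z\<close> and \<open>y\<close> are incompatible with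
  additivity at \<open>z + y\<close>.\<close>

lemma perp_lift_i_uniform:
  "(\<forall>z\<in>e_perp. perp_lift (hscale \<i> z) = hscale \<i> (perp_lift z))
    \<or> (\<forall>z\<in>e_perp. perp_lift (hscale \<i> z) = hscale (- \<i>) (perp_lift z))"
proof (rule ccontr)
  assume "\<not> ?thesis"
  then obtain z y where z: "z \<in> e_perp" "perp_lift (hscale \<i> z) \<noteq> hscale \<i> (perp_lift z)"
    and y: "y \<in> e_perp" "perp_lift (hscale \<i> y) \<noteq> hscale (- \<i>) (perp_lift y)" by blast
  have z': "perp_lift (hscale \<i> z) = hscale (- \<i>) (perp_lift z)" using perp_lift_i[OF z(1)] z(2) by blast
  have y': "perp_lift (hscale \<i> y) = hscale \<i> (perp_lift y)" using perp_lift_i[OF y(1)] y(2) by blast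
  have sum: "perp_lift (hscale \<i> (z + y)) = hscale (- \<i>) (perp_lift z) + hscale \<i> (perp_lift y)"
    using perp_lift_add[OF e_perp_hscale[OF z(1)] e_perp_hscale[OF y(1)]] z' y'
    by (simp add: hscale_add_right)
  have two_i: "hscale \<i> v - hscale (- \<i>) v = 0 \<Longrightarrow> v = 0" for v :: 'b
    by (simp add: hscale_eq_zero_iff flip: hscale_diff_left)
  from perp_lift_i[OF e_perp_add[OF z(1) y(1)]] show False
    using sum perp_lift_add[OF z(1) y(1)] two_i[of "perp_lift z"] two_i[of "perp_lift y"] z' y' z(2) y(2)
    by (auto simp: hscale_add_right)
qed

definition sigma :: "complex \<Rightarrow> complex" where
  "sigma = (if \<forall>z\<in>e_perp. perp_lift (hscale \<i> z) = hscale \<i> (perp_lift z) then id else cnj)"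

lemma id_or_cnj_sigma: "id_or_cnj sigma"
  by (simp add: sigma_def id_or_cnj_def)

lemma perp_lift_hscale:
  assumes z: "z \<in> e_perp"
  shows "perp_lift (hscale c z) = hscale (sigma c) (perp_lift z)"
proof -
  have i: "perp_lift (hscale \<i> z) = hscale (sigma \<i>) (perp_lift z)"
    using perp_lift_i_uniform z by (auto simp: sigma_def)
  have "perp_lift (hscale c z) = scaleR (Re c) (perp_lift z) + scaleR (Im c) (perp_lift (hscale \<i> z))"
    unfolding hscale_Re_Im[of c z] by (rule perp_lift_real_linear[OF z e_perp_hscale[OF z]])
  also have "\<dots> = hscale (complex_of_real (Re c) + complex_of_real (Im c) * sigma \<i>) (perp_lift z)"
    unfolding i by (simp add: scaleR_hscale hscale_hscale hscale_add_left)
  also have "complex_of_real (Re c) + complex_of_real (Im c) * sigma \<i> = sigma c"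
    by (auto simp: sigma_def complex_eq_iff)
  finally show ?thesis .
qed

lemma hinner_perp_lift:
  assumes z: "z \<in> e_perp" and y: "y \<in> e_perp"
  shows "hinner (perp_lift z) (perp_lift y) = sigma (hinner z y)"
proof -
  have "Re (hinner (perp_lift z) (perp_lift (hscale \<i> y))) = Re (hinner z (hscale \<i> y))"
    by (rule Re_hinner_perp_lift[OF z e_perp_hscale[OF y]])
  then have "Re (sigma \<i> * hinner (perp_lift z) (perp_lift y)) = Re (\<i> * hinner z y)"
    by (simp add: perp_lift_hscale[OF y] hinner_hscale_right)
  then show ?thesis
    using Re_hinner_perp_lift[OF z y] id_or_cnj_sigma by (auto simp: id_or_cnj_def complex_eq_iff)
qed

definition perp_part :: "'a \<Rightarrow> 'a" where
  "perp_part x = x - hscale (hinner e x) e"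

definition induced :: "'a \<Rightarrow> 'b" where
  "induced x = perp_lift (perp_part x) + hscale (sigma (hinner e x)) e'"

lemma perp_part_in_e_perp: "perp_part x \<in> e_perp"
  by (simp add: perp_part_def e_perp_def hinner_diff_right hinner_hscale_right hinner_e_e)

lemma perp_part_add: "perp_part (x + y) = perp_part x + perp_part y"
  by (simp add: perp_part_def hinner_add_right hscale_add_left algebra_simps)

lemma perp_part_hscale: "perp_part (hscale c x) = hscale c (perp_part x)"
  by (simp add: perp_part_def hinner_hscale_right hscale_diff_right hscale_hscale)

lemma induced_add: "induced (x + y) = induced x + induced y"
  unfolding induced_def perp_part_add perp_lift_add[OF perp_part_in_e_perp perp_part_in_e_perp]
  by (simp add: hinner_add_right id_or_cnj_simps(1)[OF id_or_cnj_sigma] hscale_add_left algebra_simps)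

lemma induced_hscale: "induced (hscale c x) = hscale (sigma c) (induced x)"
  unfolding induced_def perp_part_hscale perp_lift_hscale[OF perp_part_in_e_perp]
  by (simp add: hinner_hscale_right id_or_cnj_simps(2)[OF id_or_cnj_sigma] hscale_add_right hscale_hscale)

lemma hinner_induced: "hinner (induced x) (induced y) = sigma (hinner x y)"
proof -
  have P: "hinner (perp_part z) e = 0" "hinner e (perp_part z) = 0" for z
    using hinner_perp_e[OF perp_part_in_e_perp] perp_part_in_e_perp by (auto simp: e_perp_def)
  have "hinner x y = hinner (perp_part x + hscale (hinner e x) e) (perp_part y + hscale (hinner e y) e)"
    by (simp add: perp_part_def)
  also have "\<dots> = hinner (perp_part x) (perp_part y) + cnj (hinner e x) * hinner e y"
    using P hinner_e_e by (simp add: hinner_add_left hinner_add_right hinner_hscale_left hinner_hscale_right)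
  finally have xy: "hinner x y = hinner (perp_part x) (perp_part y) + cnj (hinner e x) * hinner e y" .
  have "hinner (induced x) (induced y)
      = hinner (perp_lift (perp_part x)) (perp_lift (perp_part y)) + cnj (sigma (hinner e x)) * sigma (hinner e y)"
    using hinner_e'_perp_lift[OF perp_part_in_e_perp] hinner_perp_lift_e'[OF perp_part_in_e_perp] hinner_e'_e'
    by (simp add: induced_def hinner_add_left hinner_add_right hinner_hscale_left hinner_hscale_right)
  also have "\<dots> = sigma (hinner x y)"
    unfolding xy hinner_perp_lift[OF perp_part_in_e_perp perp_part_in_e_perp]
    using id_or_cnj_simps[OF id_or_cnj_sigma] by simp
  finally show ?thesis .
qed

lemma norm_induced: "norm (induced x) = norm x"
proof -
  have "complex_of_real ((norm (induced x))\<^sup>2) = complex_of_real ((norm x)\<^sup>2)"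
    using hinner_induced[of x x] by (simp only: hinner_norm id_or_cnj_simps(3)[OF id_or_cnj_sigma])
  then have "(norm (induced x))\<^sup>2 = (norm x)\<^sup>2" using of_real_eq_iff by blast
  then show ?thesis by (simp add: power2_eq_iff_nonneg)
qed

lemma induced_zero: "induced 0 = 0"
  using induced_add[of 0 0] by simp

lemma induced_nonzero: "x \<noteq> 0 \<Longrightarrow> induced x \<noteq> 0"
  using norm_induced[of x] by auto

lemma induced_inj: "induced x = induced y \<Longrightarrow> x = y"
  using induced_add[of "x - y" y] norm_induced[of "x - y"] by simp

lemma ray_induced:
  assumes x: "x \<noteq> 0"
  shows "ray (induced x) = fs (ray x)"
proof (cases "hinner e x = 0")
  case True
  then have "x \<in> e_perp" "perp_part x = x" by (simp_all add: e_perp_def perp_part_def)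
  then show ?thesis
    using ray_perp_lift[OF _ x] True id_or_cnj_simps(4)[OF id_or_cnj_sigma] by (simp add: induced_def)
next
  case False
  define y where "y = hscale (1 / hinner e x) x"
  have y: "hinner e y = 1" using False by (simp add: y_def hinner_hscale_right)
  have "perp_part y = y - e" using y by (simp add: perp_part_def)
  then have "induced y = nlift y"
    using y id_or_cnj_simps(5)[OF id_or_cnj_sigma] by (simp add: induced_def perp_lift_def)
  moreover have "x = hscale (hinner e x) y" using False by (simp add: y_def hscale_hscale)
  ultimately have "ray (induced x) = ray (nlift y)"
    using False induced_hscale ray_hscale id_or_cnj_simps(6)[OF id_or_cnj_sigma] by metis
  also have "\<dots> = fs (ray x)"
    using ray_nlift[OF y] False by (simp add: y_def ray_hscale)
  finally show ?thesis .
qed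

text \<open>The two cases are whether the subspace \<open>fu (ray v)\<close> is nonzero.\<close>

lemma induced_range_or_orthogonal:
  assumes v: "v \<noteq> 0"
  shows "(\<exists>x. induced x = v) \<or> (\<forall>x. hinner v (induced x) = 0)"
proof -
  have Lv: "ray v \<in> Lsub" by (rule ray_Lsub)
  define F where "F = fu (ray v)"
  have F: "F \<in> Lsub" unfolding F_def using fu_Lsub[OF Lv] .
  have key: "ebar (ray x) F = ebar (ray (induced x)) (ray v)" if "x \<noteq> 0" for x
    unfolding F_def using ebar_fu[OF ray_in_rays[OF that] Lv] ray_induced[OF that] by simp
  show ?thesis
  proof (cases "\<exists>x\<in>F. x \<noteq> 0")
    case True
    then obtain x where x: "x \<in> F" "x \<noteq> 0" by blast
    then have "ray (induced x) \<subseteq> ray v"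
      using key[OF x(2)] ebar_eq_1_iff[OF x(2) F] ebar_eq_1_iff_ray_subset[OF induced_nonzero Lv] by simp
    then obtain c where "induced x = hscale c v" by (metis mem_ray self_in_ray subsetD)
    then have "v = hscale (1 / c) (induced x)" using induced_nonzero[OF x(2)] by (auto simp: hscale_hscale)
    then have "v = induced (hscale (sigma (1 / c)) x)"
      using induced_hscale id_or_cnj_simps(8)[OF id_or_cnj_sigma] by simp
    then show ?thesis by blast
  next
    case False
    have "hinner v (induced x) = 0" if x: "x \<noteq> 0" for x
    proof -
      have "proj F x = 0" using False proj_in[OF F] by blast
      then have "ebar (ray (induced x)) (ray v) = 0" using key[OF x] ebar_ray[OF x F] by simp
      then show ?thesis
        using ebar_ray_ray[OF induced_nonzero[OF x] v] trans_prob_eq_0_iff[OF v induced_nonzero[OF x]] by simp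
    qed
    then show ?thesis using induced_zero by (metis hinner_zero_right)
  qed
qed

lemma induced_surj: "\<exists>x. induced x = v"
proof (rule ccontr)
  assume not_range: "\<nexists>x. induced x = v"
  then have v: "v \<noteq> 0" using induced_zero by auto
  define w where "w = v + induced e"
  have "\<nexists>x. induced x = w"
  proof
    assume "\<exists>x. induced x = w"
    then obtain x where "induced x = w" ..
    then have "induced (x - e) = v" using induced_add[of "x - e" e] by (simp add: w_def)
    then show False using not_range by blast
  qed
  then have "w \<noteq> 0" using induced_zero by auto
  then have "hinner w (induced e) = 0"
    using induced_range_or_orthogonal \<open>\<nexists>x. induced x = w\<close> by blast
  moreover have "hinner w (induced e) = 1"
    using induced_range_or_orthogonal[OF v] not_range norm_induced[of e] norm_e
    by (simp add: w_def hinner_add_left hinner_norm)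
  ultimately show False by simp
qed

lemma semiunitary_induced: "semiunitary induced"
proof (rule semiunitaryI[OF id_or_cnj_sigma _ induced_add induced_hscale hinner_induced])
  show "bij induced" unfolding bij_def inj_def surj_def using induced_inj induced_surj by metis
qed

lemma chu_eq_induced: "chu_eq rays Lsub (PU induced) (vimage induced) fs fu"
proof -
  have "induced x \<in> S \<longleftrightarrow> x \<in> fu S" if S: "S \<in> Lsub" for S x
  proof (cases "x = 0")
    case True then show ?thesis using Lsub_zero[OF S] Lsub_zero[OF fu_Lsub[OF S]] induced_zero by simp
  next
    case False
    then show ?thesis
      using ebar_eq_1_iff[OF False fu_Lsub[OF S]] ebar_eq_1_iff[OF induced_nonzero[OF False] S]
        ebar_fu[OF ray_in_rays[OF False] S] ray_induced[OF False] by simp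
  qed
  moreover have "PU induced r = fs r" if "r \<in> rays" for r
    using ray_induced[OF rep_nonzero[OF that]] ray_rep[OF that] by (simp add: PU_def)
  ultimately show ?thesis by (auto simp: chu_eq_def)
qed

end

lemma bm_morph_induced_by_semiunitary:
  fixes fs :: "'a::chilbert set \<Rightarrow> 'b::chilbert set" and fu :: "'b set \<Rightarrow> 'a set"
  assumes x0: "(x0::'a) \<noteq> 0" and bm: "bm_morph rays Lsub ebar rays Lsub ebar fs fu"
  shows "\<exists>U :: 'a \<Rightarrow> 'b. semiunitary U \<and> chu_eq rays Lsub (PU U) (vimage U) fs fu"
proof -
  interpret bm_chu_morphism fs fu using bm by unfold_locales
  define e where "e = unit_vec x0"
  have e: "norm e = 1" "e \<noteq> 0" using norm_unit_vec[OF x0] by (auto simp: e_def)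
  interpret bm_chu_morphism_based fs fu e "unit_vec (lift e)"
    using e norm_unit_vec[OF lift_nonzero] ray_unit_vec[OF lift_nonzero] ray_lift
    by unfold_locales auto
  show ?thesis using semiunitary_induced chu_eq_induced by blast
qed

theorem theorem3p15:
  assumes "dim_gt2 TYPE('a::chilbert)"
    and "dim_gt2 TYPE('b::chilbert)"
    and "dim_gt2 TYPE('c::chilbert)"
  shows "
    \<comment> \<open>PR on objects lands in bmChu: biextensional Chu spaces over [0,1]\<close>
    (chu_space01 (rays :: 'a set set) Lsub ebar \<and> biextensional_chu (rays :: 'a set set) Lsub ebar)
  \<and>
    \<comment> \<open>PR on morphisms lands in bmChu\<close>
    (\<forall>U :: 'a \<Rightarrow> 'b. semiunitary U \<longrightarrow> bm_morph rays Lsub ebar rays Lsub ebar (PU U) (vimage U))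
  \<and>
    \<comment> \<open>independent of the representative of [U]\<close>
    (\<forall>U V :: 'a \<Rightarrow> 'b. semiunitary U \<and> semiunitary V \<and> su_equiv U V \<longrightarrow>
        chu_eq rays Lsub (PU U) (vimage U) (PU V) (vimage V))
  \<and>
    \<comment> \<open>preserves identities\<close>
    (chu_eq (rays :: 'a set set) Lsub (PU (id :: 'a \<Rightarrow> 'a)) (vimage id) id id)
  \<and>
    \<comment> \<open>preserves composition\<close>
    (\<forall>(U :: 'a \<Rightarrow> 'b) (V :: 'b \<Rightarrow> 'c). semiunitary U \<and> semiunitary V \<longrightarrow>
        chu_eq rays Lsub (PU (V \<circ> U)) (vimage (V \<circ> U)) (PU V \<circ> PU U) (vimage U \<circ> vimage V))
  \<and>
    \<comment> \<open>faithful\<close>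
    (\<forall>U V :: 'a \<Rightarrow> 'b. semiunitary U \<and> semiunitary V \<and>
        chu_eq rays Lsub (PU U) (vimage U) (PU V) (vimage V) \<longrightarrow> su_equiv U V)
  \<and>
    \<comment> \<open>full\<close>
    (\<forall>(fs :: 'a set \<Rightarrow> 'b set) (fu :: 'b set \<Rightarrow> 'a set).
        bm_morph rays Lsub ebar rays Lsub ebar fs fu \<longrightarrow>
        (\<exists>U :: 'a \<Rightarrow> 'b. semiunitary U \<and> chu_eq rays Lsub (PU U) (vimage U) fs fu))"
proof (intro conjI allI impI)
  show "chu_space01 (rays :: 'a set set) Lsub ebar" by (rule chu_space01_rays)
  show "biextensional_chu (rays :: 'a set set) Lsub ebar" by (rule biextensional_chu_rays)
  show "bm_morph rays Lsub ebar rays Lsub ebar (PU U) (vimage U)" if "semiunitary U" for U :: "'a \<Rightarrow> 'b"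
    using semiunitary_bm_morph[OF that] .
  show "chu_eq rays Lsub (PU U) (vimage U) (PU V) (vimage V)"
    if "semiunitary U \<and> semiunitary V \<and> su_equiv U V" for U V :: "'a \<Rightarrow> 'b"
    using chu_eq_su_equiv that by blast
  show "chu_eq (rays :: 'a set set) Lsub (PU (id :: 'a \<Rightarrow> 'a)) (vimage id) id id"
    by (rule chu_eq_PU_id)
  show "chu_eq rays Lsub (PU (V \<circ> U)) (vimage (V \<circ> U)) (PU V \<circ> PU U) (vimage U \<circ> vimage V)"
    if "semiunitary U \<and> semiunitary V" for U :: "'a \<Rightarrow> 'b" and V :: "'b \<Rightarrow> 'c"
    using chu_eq_PU_comp that by blast
  show "su_equiv U V"
    if "semiunitary U \<and> semiunitary V \<and> chu_eq rays Lsub (PU U) (vimage U) (PU V) (vimage V)"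
    for U V :: "'a \<Rightarrow> 'b"
    using that PU_eq_imp_su_equiv[OF assms(1)] by (auto simp: chu_eq_def)
  show "\<exists>U :: 'a \<Rightarrow> 'b. semiunitary U \<and> chu_eq rays Lsub (PU U) (vimage U) fs fu"
    if "bm_morph rays Lsub ebar rays Lsub ebar fs fu" for fs :: "'a set \<Rightarrow> 'b set" and fu
    using bm_morph_induced_by_semiunitary[OF _ that] dim_gt2_nonzero[OF assms(1)] by metis
qed

end
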